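(* Let $\mathcal{I}$ be a meager ideal on $\mathbf{N}$ and let $\mathscr{A}$ be a countable family of regular matrices $A=(a_{n,i})$ each satisfying $\lim_n\sum_i|a_{n,i}|=1$. Then the set $$\{x\in(0,1]: \Gamma_b^k(x,\mathcal{I},A)=\Delta_b^k \text{ for all integers } b\ge2,\ k\ge1, \text{ and all } A\in\mathscr{A}\}$$ is comeager in $(0,1]$.
   Context: For an integer $b\ge 2$ and $x\in(0,1]$, write $x=\sum_{n\ge 1} d_{b,n}(x)/b^n$ for the unique nonterminating $b$-adic expansion, with digits $d_{b,n}(x)\in\{0,\dots,b-1\}$. Let $S_b^k$ be the set of strings $\bm{s}=s_1\cdots s_k$ of length $k$ over $\{0,\dots,b-1\}$. For $\bm{s}\in S_b^k$ and $n\ge1$ put $\pi_{b,\bm{s},n}(x)=\frac{1}{n}\#\{i\in\{1,\dots,n\}: d_{b,i+j-1}(x)=s_j \text{ for all } j=1,\dots,k\}$, and $\bm{\pi}^k_{b,n}(x)=(\pi_{b,\bm{s},n}(x):\bm{s}\in S_b^k)\in\mathbf{R}^{b^k}$. Let $\Delta_b^k=\{(p_{\bm{s}})_{\bm{s}\in S_b^k}\in\mathbf{R}^{b^k}: \sum_{\bm{s}}p_{\bm{s}}=1,\ p_{\bm{s}}\ge0,\ \sum_{s_0}p_{s_0\bm{s}}=\sum_{s_k}p_{\bm{s}s_k} \text{ for all } \bm{s}\in S_b^{k-1}\}$ (concatenated strings). An ideal on $\mathbf{N}$ is a family $\mathcal{I}\subseteq\mathcal{P}(\mathbf{N})$ closed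 under finite unions and subsets, containing all finite sets, and $\ne\mathcal{P}(\mathbf{N})$; it is meager if it is a meager subset of $\mathcal{P}(\mathbf{N})$ with the Cantor-space topology. A regular matrix is an infinite real matrix $A=(a_{n,i})_{n,i\in\mathbf{N}}$ such that for every $d$ and every $\mathbf{R}^d$-valued sequence $\bm{z}=(\bm{z}_i)$ converging to $\bm{\eta}$, the series $A_n\bm{z}:=\sum_i a_{n,i}\bm{z}_i$ exists for all $n$ and $\lim_n A_n\bm{z}=\bm{\eta}$. For a sequence $(x_n)$ in $\mathbf{R}^d$, $\eta$ is an $\mathcal{I}$-cluster point if $\{n: x_n\in U\}\notin\mathcal{I}$ for every open neighborhood $U$ of $\eta$. With $\bm{\pi}^k_b(x)=(\bm{\pi}^k_{b,n}(x):n\ge1)$, $\Gamma_b^k(x,\mathcal{I},A)$ denotes the set of $\mathcal{I}$-cluster points of $(A_n\bm{\pi}^k_b(x):n\ge1)$. *)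

theory Defs
  imports "HOL-Analysis.Analysis"
begin

definition nowhere_dense_in :: "'a topology \<Rightarrow> 'a set \<Rightarrow> bool" where
  "nowhere_dense_in X S \<longleftrightarrow> S \<subseteq> topspace X \<and> X interior_of (X closure_of S) = {}"

definition meager_in :: "'a topology \<Rightarrow> 'a set \<Rightarrow> bool" where
  "meager_in X S \<longleftrightarrow> S \<subseteq> topspace X \<and>
     (\<exists>F. countable F \<and> (\<forall>T\<in>F. nowhere_dense_in X T) \<and> S \<subseteq> \<Union>F)"

definition comeager_in :: "'a topology \<Rightarrow> 'a set \<Rightarrow> bool" where
  "comeager_in X S \<longleftrightarrow> S \<subseteq> topspace X \<and> meager_in X (topspace X - S)"

definition is_ideal :: "nat set set \<Rightarrow> bool" where
  "is_ideal I \<longleftrightarrow>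
     (\<forall>A\<in>I. \<forall>B\<in>I. A \<union> B \<in> I) \<and>
     (\<forall>A\<in>I. \<forall>B. B \<subseteq> A \<longrightarrow> B \<in> I) \<and>
     (\<forall>F. finite F \<longrightarrow> F \<in> I) \<and>
     I \<noteq> UNIV"

text \<open>Cantor space: P(N) identified with nat => bool via characteristic functions,
  with the product of discrete two-point spaces.\<close>
definition cantor_space :: "(nat \<Rightarrow> bool) topology" where
  "cantor_space = product_topology (\<lambda>_. discrete_topology (UNIV :: bool set)) UNIV"

definition meager_ideal :: "nat set set \<Rightarrow> bool" where
  "meager_ideal I \<longleftrightarrow> is_ideal I \<and> meager_in cantor_space ((\<lambda>A n. n \<in> A) ` I)"

text \<open>R^d-valued sequences are encoded as z :: nat => nat => real with z i j the j-th
  coordinate (j < d) of the i-th term; convergence in R^d is coordinatewise.\<close>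
definition regular_matrix :: "(nat \<Rightarrow> nat \<Rightarrow> real) \<Rightarrow> bool" where
  "regular_matrix a \<longleftrightarrow>
     (\<forall>(d::nat) (z::nat \<Rightarrow> nat \<Rightarrow> real) (\<eta>::nat \<Rightarrow> real).
        (\<forall>j<d. (\<lambda>i. z i j) \<longlonglongrightarrow> \<eta> j) \<longrightarrow>
        (\<forall>n. \<forall>j<d. summable (\<lambda>i. a n i * z i j)) \<and>
        (\<forall>j<d. (\<lambda>n. \<Sum>i. a n i * z i j) \<longlonglongrightarrow> \<eta> j))"

definition digit_seq :: "nat \<Rightarrow> real \<Rightarrow> nat \<Rightarrow> nat" where
  "digit_seq b x = (THE e. (\<forall>n. e n < b) \<and>
      (\<lambda>n. real (e n) / real b ^ Suc n) sums x \<and> (\<forall>m. \<exists>n\<ge>m. e n \<noteq> 0))"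

definition digit :: "nat \<Rightarrow> nat \<Rightarrow> real \<Rightarrow> nat" where
  "digit b n x = digit_seq b x (n - 1)"

definition strings :: "nat \<Rightarrow> nat \<Rightarrow> nat list set" where
  "strings b k = {s. length s = k \<and> (\<forall>c\<in>set s. c < b)}"

text \<open>pi_{b,s,n}(x); s ! j is s_{j+1}.\<close>
definition freq :: "nat \<Rightarrow> nat list \<Rightarrow> nat \<Rightarrow> real \<Rightarrow> real" where
  "freq b s n x = real (card {i\<in>{1..n}. \<forall>j<length s. digit b (i + j) x = s ! j}) / real n"

text \<open>Vectors in R^{b^k} are represented as functions nat list => real vanishing
  outside S_b^k (product topology on nat list => real).\<close>
definition freq_vec :: "nat \<Rightarrow> nat \<Rightarrow> nat \<Rightarrow> real \<Rightarrow> nat list \<Rightarrow> real" where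
  "freq_vec b k n x = (\<lambda>s. if s \<in> strings b k then freq b s n x else 0)"

text \<open>A_n pi^k_b(x): rows and columns of A indexed from 0, column i paired with
  pi^k_{b,i+1}(x).\<close>
definition mat_freq :: "(nat \<Rightarrow> nat \<Rightarrow> real) \<Rightarrow> nat \<Rightarrow> nat \<Rightarrow> real \<Rightarrow> nat \<Rightarrow> nat list \<Rightarrow> real" where
  "mat_freq a b k x n = (\<lambda>s. if s \<in> strings b k then (\<Sum>i. a n i * freq b s (Suc i) x) else 0)"

definition I_cluster :: "nat set set \<Rightarrow> (nat \<Rightarrow> 'a::topological_space) \<Rightarrow> 'a \<Rightarrow> bool" where
  "I_cluster I f \<eta> \<longleftrightarrow> (\<forall>U. open U \<longrightarrow> \<eta> \<in> U \<longrightarrow> {n. f n \<in> U} \<notin> I)"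

definition Gamma :: "nat \<Rightarrow> nat \<Rightarrow> real \<Rightarrow> nat set set \<Rightarrow> (nat \<Rightarrow> nat \<Rightarrow> real) \<Rightarrow> (nat list \<Rightarrow> real) set" where
  "Gamma b k x I a = {\<eta>. I_cluster I (mat_freq a b k x) \<eta>}"

definition Delta :: "nat \<Rightarrow> nat \<Rightarrow> (nat list \<Rightarrow> real) set" where
  "Delta b k = {p. (\<forall>s. s \<notin> strings b k \<longrightarrow> p s = 0) \<and>
      (\<Sum>s\<in>strings b k. p s) = 1 \<and> (\<forall>s\<in>strings b k. p s \<ge> 0) \<and>
      (\<forall>s\<in>strings b (k - 1). (\<Sum>c<b. p (c # s)) = (\<Sum>c<b. p (s @ [c])))}"

end

theory Submission
  imports Defs
begin

(* Gamma is always contained in Delta: the frequency vectors satisfy the defining linear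
   constraints of Delta up to an error O(1/n), A preserves limits, and I-cluster points
   respect limits of continuous functionals.

   For the converse, Talagrand's characterization gives an interval partition t such that
   no set containing infinitely many of its blocks lies in I.  Fix b, k, A and a basic open
   set V meeting Delta.  A point of Delta is a circulation on the de Bruijn graph, hence a
   mixture of cycles, so some periodic digit sequence has block frequencies close to it.
   Inside any interval one finds a subinterval of numbers whose digits follow such a
   sequence for a long time; by regularity of A, the transformed frequencies then stay in
   V along a whole block of t.  So the numbers visiting V on infinitely many blocks form a
   comeager set, and the countable intersection over all b, k, A and V is the required
   comeager set. *)

section \<open>Block counts\<close>

definition block :: "(nat \<Rightarrow> 'a) \<Rightarrow> nat \<Rightarrow> nat \<Rightarrow> 'a list" where
  "block f k p = map (\<lambda>j. f (p + j)) [0..<k]"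

definition block_count :: "(nat \<Rightarrow> 'a) \<Rightarrow> nat \<Rightarrow> 'a list \<Rightarrow> nat \<Rightarrow> nat \<Rightarrow> nat" where
  "block_count f k s a n = card {p\<in>{a..<a+n}. block f k p = s}"

lemma length_block [simp]: "length (block f k p) = k"
  by (simp add: block_def)

lemma nth_block [simp]: "j < k \<Longrightarrow> block f k p ! j = f (p + j)"
  by (simp add: block_def)

lemma block_shift: "block (\<lambda>q. f (q + t)) k p = block f k (p + t)"
  by (simp add: block_def algebra_simps)

lemma block_Suc_Cons: "block f (Suc k) p = f p # block f k (Suc p)"
  unfolding block_def by (simp add: upt_conv_Cons map_Suc_upt[symmetric] del: upt_Suc)

lemma block_Suc_snoc: "block f (Suc k) p = block f k p @ [f (p + k)]"
  unfolding block_def by simp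

lemma block_in_strings: "(\<And>q. f q < b) \<Longrightarrow> block f k p \<in> strings b k"
  by (auto simp: strings_def block_def)

lemma finite_strings: "finite (strings b k)"
proof (rule finite_subset)
  show "strings b k \<subseteq> {xs. set xs \<subseteq> {..<b} \<and> length xs = k}"
    by (auto simp: strings_def)
qed (rule finite_lists_length_eq, simp)

lemma block_count_le: "block_count f k s a n \<le> n"
proof -
  have "block_count f k s a n \<le> card {a..<a+n}"
    unfolding block_count_def by (rule card_mono) auto
  then show ?thesis by simp
qed

lemma block_count_add:
  "block_count f k s a (n + m) = block_count f k s a n + block_count f k s (a + n) m"
proof -
  have "{p\<in>{a..<a+(n+m)}. block f k p = s} =
        {p\<in>{a..<a+n}. block f k p = s} \<union> {p\<in>{a+n..<a+n+m}. block f k p = s}"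
    by auto
  moreover have "card ({p\<in>{a..<a+n}. block f k p = s} \<union> {p\<in>{a+n..<a+n+m}. block f k p = s}) =
      card {p\<in>{a..<a+n}. block f k p = s} + card {p\<in>{a+n..<a+n+m}. block f k p = s}"
    by (rule card_Un_disjoint) auto
  ultimately show ?thesis
    unfolding block_count_def by simp
qed

lemma block_count_shift: "block_count f k s (a + t) n = block_count (\<lambda>q. f (q + t)) k s a n"
proof -
  have "{p\<in>{a+t..<a+t+n}. block f k p = s} = (\<lambda>p. p + t) ` {p\<in>{a..<a+n}. block (\<lambda>q. f (q + t)) k p = s}"
  proof (rule set_eqI, rule iffI)
    fix p assume "p \<in> {p\<in>{a+t..<a+t+n}. block f k p = s}"
    then show "p \<in> (\<lambda>p. p + t) ` {p\<in>{a..<a+n}. block (\<lambda>q. f (q + t)) k p = s}"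
      by (intro image_eqI[of _ _ "p - t"]) (auto simp: block_shift)
  qed (auto simp: block_shift)
  then show ?thesis
    unfolding block_count_def by (simp add: card_image)
qed

lemma block_count_cong:
  assumes "\<And>q. a \<le> q \<Longrightarrow> q < a + n + k \<Longrightarrow> f q = g q"
  shows "block_count f k s a n = block_count g k s a n"
proof -
  have "block f k p = block g k p" if "p \<in> {a..<a+n}" for p
    using that assms by (auto simp: block_def)
  then have "{p\<in>{a..<a+n}. block f k p = s} = {p\<in>{a..<a+n}. block g k p = s}"
    by auto
  then show ?thesis
    unfolding block_count_def by simp
qed

text \<open>Changing a sequence outside a window only affects the counts of the at most \<open>k\<close>
  blocks that stick out of it.\<close>
lemma block_count_perturb:
  assumes "\<And>q. a \<le> q \<Longrightarrow> q < a + n \<Longrightarrow> f q = g q"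
  shows "\<bar>real (block_count f k s a n) - real (block_count g k s a n)\<bar> \<le> real k"
proof (cases "n \<le> k")
  case True
  then show ?thesis using block_count_le[of f k s a n] block_count_le[of g k s a n] by linarith
next
  case False
  then obtain n' where n': "n = n' + k" by (metis le_add_diff_inverse2 nat_le_linear)
  have "block_count f k s a n' = block_count g k s a n'"
    by (rule block_count_cong) (use assms n' in auto)
  then show ?thesis
    using n' block_count_add[of _ k s a n' k]
      block_count_le[of f k s "a+n'" k] block_count_le[of g k s "a+n'" k] by auto
qed

lemma block_count_Suc_start:
  "\<bar>real (block_count f k s (Suc a) n) - real (block_count f k s a n)\<bar> \<le> 1"
proof -
  have "block_count f k s a 1 + block_count f k s (Suc a) n =
        block_count f k s a n + block_count f k s (a + n) 1"
    using block_count_add[of f k s a 1 n] block_count_add[of f k s a n 1] by simp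
  then show ?thesis
    using block_count_le[of f k s a 1] block_count_le[of f k s "a+n" 1] by linarith
qed

lemma sum_block_count_strings:
  assumes "\<And>q. f q < b"
  shows "(\<Sum>s\<in>strings b k. block_count f k s a n) = n"
proof -
  have "block f k ` {a..<a+n} \<subseteq> strings b k"
    using block_in_strings assms by blast
  then show ?thesis
    unfolding block_count_def
    using sum.group[of "{a..<a+n}" "strings b k" "block f k" "\<lambda>_. 1::nat"] finite_strings
    by simp
qed

lemma sum_card_fibres:
  fixes g :: "'a \<Rightarrow> nat"
  assumes "finite S" "\<And>p. p \<in> S \<Longrightarrow> g p < b"
  shows "(\<Sum>c<b. card {p\<in>S. g p = c}) = card S"
proof -
  have "g ` S \<subseteq> {..<b}" using assms(2) by auto
  then show ?thesis using sum.group[of S "{..<b}" g "\<lambda>_. 1::nat"] assms(1) by simp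
qed

lemma sum_block_count_Cons:
  fixes f :: "nat \<Rightarrow> nat"
  assumes "\<And>q. f q < b"
  shows "(\<Sum>c<b. block_count f (Suc k) (c # v) a n) = block_count f k v (Suc a) n"
proof -
  let ?S = "{p\<in>{a..<a+n}. block f k (Suc p) = v}"
  have "block_count f (Suc k) (c # v) a n = card {p\<in>?S. f p = c}" for c
    unfolding block_count_def block_Suc_Cons by (rule arg_cong[where f=card]) auto
  then have "(\<Sum>c<b. block_count f (Suc k) (c # v) a n) = card ?S"
    using sum_card_fibres[of ?S f b] assms by simp
  also have "\<dots> = block_count (\<lambda>q. f (q + 1)) k v a n"
    unfolding block_count_def using block_shift[where f=f and t=1] by simp
  also have "\<dots> = block_count f k v (Suc a) n"
    using block_count_shift[of f k v a 1 n] by simp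
  finally show ?thesis .
qed

lemma sum_block_count_snoc:
  fixes f :: "nat \<Rightarrow> nat"
  assumes "\<And>q. f q < b"
  shows "(\<Sum>c<b. block_count f (Suc k) (v @ [c]) a n) = block_count f k v a n"
proof -
  let ?S = "{p\<in>{a..<a+n}. block f k p = v}"
  have "block_count f (Suc k) (v @ [c]) a n = card {p\<in>?S. f (p + k) = c}" for c
    unfolding block_count_def block_Suc_snoc by (rule arg_cong[where f=card]) auto
  then show ?thesis
    using sum_card_fibres[of ?S "\<lambda>p. f (p + k)" b] assms unfolding block_count_def by simp
qed

lemma block_count_periodic_mult:
  assumes "\<And>q. f (q + L) = f q"
  shows "block_count f k s 0 (m * L) = m * block_count f k s 0 L"
proof (induction m)
  case (Suc m)
  have "f (q + m * L) = f q" for q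
  proof (induction m)
    case (Suc m)
    have "f (q + Suc m * L) = f ((q + m * L) + L)" by (simp add: algebra_simps)
    then show ?case using assms Suc by simp
  qed simp
  then have "block_count f k s (0 + m * L) L = block_count f k s 0 L"
    using block_count_shift[of f k s 0 "m * L" L] by simp
  then show ?case
    using Suc block_count_add[of f k s 0 "m * L" L] by (simp add: add.commute)
qed (simp add: block_count_def)

lemma block_count_periodic_Suc_start:
  assumes "\<And>q. f (q + L) = f q"
  shows "block_count f k s 1 L = block_count f k s 0 L"
proof -
  have "block_count f k s L 1 = block_count f k s 0 1"
    using block_count_shift[of f k s 0 L 1] assms by simp
  then show ?thesis
    using block_count_add[of f k s 0 1 L] block_count_add[of f k s 0 L 1] by simp
qed

section \<open>Cyclic words and circulations on the de Bruijn graph\<close>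

definition cyclic :: "'a list \<Rightarrow> nat \<Rightarrow> 'a" where
  "cyclic u q = u ! (q mod length u)"

definition cycle_count :: "nat \<Rightarrow> 'a list \<Rightarrow> 'a list \<Rightarrow> nat" where
  "cycle_count k u s = block_count (cyclic u) k s 0 (length u)"

lemma cyclic_add_length [simp]: "cyclic u (q + length u) = cyclic u q"
  by (simp add: cyclic_def)

lemma cyclic_less: "u \<noteq> [] \<Longrightarrow> \<forall>x\<in>set u. x < b \<Longrightarrow> cyclic u q < (b::nat)"
  unfolding cyclic_def by (metis length_greater_0_conv mod_less_divisor nth_mem)

lemma cycle_count_Nil [simp]: "cycle_count k [] s = 0"
  by (simp add: cycle_count_def block_count_def)

lemma cycle_count_le: "cycle_count k u s \<le> length u"
  unfolding cycle_count_def by (rule block_count_le)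

lemma sum_cycle_count_strings:
  "u \<noteq> [] \<Longrightarrow> \<forall>x\<in>set u. x < b \<Longrightarrow> (\<Sum>s\<in>strings b k. cycle_count k u s) = length u"
  unfolding cycle_count_def using sum_block_count_strings cyclic_less by blast

lemma cycle_count_pos_imp_mem:
  assumes "\<forall>q. block (cyclic u) k q \<in> E" "0 < cycle_count k u s"
  shows "s \<in> E"
proof -
  have "{p\<in>{0..<0 + length u}. block (cyclic u) k p = s} \<noteq> {}"
    using assms(2) unfolding cycle_count_def block_count_def by (metis card.empty less_irrefl)
  then show ?thesis using assms(1) by auto
qed

lemma infinite_walk:
  assumes "e0 \<in> E" and succ: "\<forall>e\<in>E. \<exists>e'\<in>E. butlast e' = tl e"
    and len: "\<forall>e\<in>E. length e = Suc k"
  shows "\<exists>g. \<forall>n. block g (Suc k) n \<in> E"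
proof -
  define nxt where "nxt e = (SOME e'. e' \<in> E \<and> butlast e' = tl e)" for e
  have nxt: "nxt e \<in> E \<and> butlast (nxt e) = tl e" if "e \<in> E" for e
  proof -
    have "\<exists>e'. e' \<in> E \<and> butlast e' = tl e" using succ that by blast
    then show ?thesis unfolding nxt_def by (rule someI_ex)
  qed
  define w where "w n = (nxt ^^ n) e0" for n
  have wE: "w n \<in> E" for n
    by (induction n) (auto simp: w_def assms(1) nxt)
  have wS: "butlast (w (Suc n)) = tl (w n)" for n
    using nxt[OF wE[of n]] by (simp add: w_def)
  have wl: "length (w n) = Suc k" for n
    using wE len by blast
  define g where "g n = hd (w n)" for n
  have wg: "w n ! j = g (n + j)" if "j < Suc k" for n j
    using that
  proof (induction j arbitrary: n)
    case 0
    have "w n \<noteq> []" using wl[of n] by auto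
    then show ?case by (simp add: g_def hd_conv_nth)
  next
    case (Suc j)
    have "w n ! Suc j = butlast (w (Suc n)) ! j"
      using wl[of n] Suc.prems by (simp add: nth_tl wS)
    also have "\<dots> = w (Suc n) ! j"
      using wl[of "Suc n"] Suc.prems by (simp add: nth_butlast)
    finally show ?case using Suc by simp
  qed
  have "block g (Suc k) n = w n" for n
    by (rule nth_equalityI) (auto simp: wl wg)
  then have "\<forall>n. block g (Suc k) n \<in> E" using wE by simp
  then show ?thesis by blast
qed

lemma block_cyclic_of_recurrence:
  assumes ij: "i < j" "block g (Suc k) i = block g (Suc k) j"
  defines "c \<equiv> map (\<lambda>m. g (i + m)) [0..<j - i]"
  shows "block (cyclic c) (Suc k) q = block g (Suc k) (i + q mod (j - i))"
proof -
  define L where "L = j - i"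
  have L0: "0 < L" using ij by (simp add: L_def)
  have cyc: "cyclic c q = g (i + q mod L)" for q
    using L0 by (simp add: cyclic_def c_def L_def)
  have rec: "g (i + x) = g (i + x mod L)" if "x < L + Suc k" for x
    using that
  proof (induction x rule: less_induct)
    case (less x)
    show ?case
    proof (cases "x < L")
      case False
      then have xl: "x - L < Suc k" "x - L < x" using less.prems L0 by auto
      have "g (i + x) = block g (Suc k) j ! (x - L)"
        using False xl by (simp add: L_def add.commute)
      also have "\<dots> = block g (Suc k) i ! (x - L)" by (simp only: ij(2))
      also have "\<dots> = g (i + (x - L))" using xl by simp
      also have "\<dots> = g (i + x mod L)"
        using less.IH[OF xl(2)] less.prems False by (simp add: le_mod_geq)
      finally show ?thesis .
    qed simp
  qed
  show ?thesis
  proof (rule nth_equalityI)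
    fix t assume "t < length (block (cyclic c) (Suc k) q)"
    then have t: "t < Suc k" by simp
    have "q mod L < L" using L0 by simp
    then have "q mod L + t < L + Suc k" using t by linarith
    then have "cyclic c (q + t) = g (i + (q mod L + t))"
      using rec[of "q mod L + t"] by (simp add: cyc mod_add_left_eq)
    then show "block (cyclic c) (Suc k) q ! t = block g (Suc k) (i + q mod (j - i)) ! t"
      using t by (simp add: L_def add.assoc)
  qed simp
qed

lemma closed_walk_word:
  assumes E: "E \<subseteq> strings b (Suc k)" "E \<noteq> {}" and succ: "\<forall>e\<in>E. \<exists>e'\<in>E. butlast e' = tl e"
  shows "\<exists>c. c \<noteq> [] \<and> (\<forall>x\<in>set c. x < b) \<and> (\<forall>q. block (cyclic c) (Suc k) q \<in> E)"
proof -
  obtain e0 where "e0 \<in> E" using E(2) by blast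
  moreover have "\<forall>e\<in>E. length e = Suc k" using E(1) by (auto simp: strings_def)
  ultimately obtain g where g: "\<And>n. block g (Suc k) n \<in> E"
    using infinite_walk[of _ E k] succ by blast
  have finE: "finite E" using E(1) finite_strings finite_subset by blast
  have "\<not> inj_on (block g (Suc k)) {0..card E}"
  proof
    assume "inj_on (block g (Suc k)) {0..card E}"
    then have "card (block g (Suc k) ` {0..card E}) = Suc (card E)" by (simp add: card_image)
    moreover have "card (block g (Suc k) ` {0..card E}) \<le> card E"
      using g finE by (intro card_mono) auto
    ultimately show False by simp
  qed
  then obtain i j where ij: "i < j" "block g (Suc k) i = block g (Suc k) j"
    unfolding inj_on_def by (metis linorder_neqE_nat)
  define c where "c = map (\<lambda>m. g (i + m)) [0..<j - i]"
  have blocks: "block (cyclic c) (Suc k) q \<in> E" for q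
    using block_cyclic_of_recurrence[OF ij] g by (simp add: c_def)
  have "x < b" if "x \<in> set c" for x
  proof -
    obtain m where "m < length c" "x = c ! m" using \<open>x \<in> set c\<close> by (metis in_set_conv_nth)
    moreover have "block (cyclic c) (Suc k) m ! 0 = c ! m" using \<open>m < length c\<close> by (simp add: cyclic_def)
    ultimately have "x \<in> set (block (cyclic c) (Suc k) m)" by (metis length_block nth_mem zero_less_Suc)
    moreover have "block (cyclic c) (Suc k) m \<in> strings b (Suc k)" using blocks E(1) by blast
    ultimately show ?thesis by (simp add: strings_def)
  qed
  moreover have "c \<noteq> []" using ij by (simp add: c_def)
  ultimately show ?thesis using blocks by blast
qed

text \<open>A circulation is a nonnegative flow on the de Bruijn graph whose vertices are the
  words of length \<open>k\<close> and in which a word of length \<open>k + 1\<close> is an edge from its prefix to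
  its suffix: at every vertex, inflow equals outflow.\<close>
definition circulation :: "nat \<Rightarrow> nat \<Rightarrow> (nat list \<Rightarrow> real) \<Rightarrow> bool" where
  "circulation b k p \<longleftrightarrow> (\<forall>s\<in>strings b (Suc k). 0 \<le> p s) \<and>
     (\<forall>v\<in>strings b k. (\<Sum>a<b. p (a # v)) = (\<Sum>a<b. p (v @ [a])))"

lemma Delta_imp_circulation: "p \<in> Delta b (Suc k) \<Longrightarrow> circulation b k p"
  by (simp add: Delta_def circulation_def)

lemma circulation_cycle_count:
  assumes "c \<noteq> []" "\<forall>x\<in>set c. x < b"
  shows "circulation b k (\<lambda>s. real (cycle_count (Suc k) c s))"
  unfolding circulation_def
proof (intro conjI ballI)
  fix v
  have pb: "\<And>q. cyclic c q < b" using cyclic_less assms by blast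
  have "(\<Sum>a<b. cycle_count (Suc k) c (a # v)) = block_count (cyclic c) k v 1 (length c)"
    unfolding cycle_count_def using sum_block_count_Cons[OF pb] by simp
  also have "\<dots> = block_count (cyclic c) k v 0 (length c)"
    by (rule block_count_periodic_Suc_start) simp
  also have "\<dots> = (\<Sum>a<b. cycle_count (Suc k) c (v @ [a]))"
    unfolding cycle_count_def using sum_block_count_snoc[OF pb] by simp
  finally show "(\<Sum>a<b. real (cycle_count (Suc k) c (a # v))) = (\<Sum>a<b. real (cycle_count (Suc k) c (v @ [a])))"
    by (metis of_nat_sum)
qed simp

lemma circulation_support_successor:
  assumes p: "circulation b k p" and e: "e \<in> strings b (Suc k)" "0 < p e"
  shows "\<exists>e'\<in>strings b (Suc k). 0 < p e' \<and> butlast e' = tl e"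
proof -
  obtain c v where cv: "e = c # v" "c < b" "v \<in> strings b k"
    using e(1) by (cases e) (auto simp: strings_def)
  have "p (c # v) \<le> (\<Sum>a<b. p (a # v))"
    using cv p by (intro member_le_sum) (auto simp: circulation_def strings_def)
  then have "0 < (\<Sum>a<b. p (v @ [a]))"
    using p cv e(2) by (auto simp: circulation_def)
  then obtain a where "a < b" "0 < p (v @ [a])"
    by (metis (no_types, lifting) lessThan_iff not_less sum_nonpos)
  moreover have "v @ [a] \<in> strings b (Suc k)" using cv(3) \<open>a < b\<close> by (auto simp: strings_def)
  ultimately show ?thesis using cv(1) by (intro bexI[of _ "v @ [a]"]) auto
qed

lemma exists_cycle_count_pos:
  assumes "c \<noteq> []" "\<forall>x\<in>set c. x < b"
  shows "\<exists>s\<in>strings b k. 0 < cycle_count k c s"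
proof (rule ccontr)
  assume "\<not> (\<exists>s\<in>strings b k. 0 < cycle_count k c s)"
  then have "(\<Sum>s\<in>strings b k. cycle_count k c s) = 0" by simp
  then show False using sum_cycle_count_strings[OF assms] assms(1) by simp
qed

lemma exists_maximal_multiple_below:
  fixes p chi :: "'a \<Rightarrow> real"
  assumes "finite S" "\<forall>s\<in>S. 0 \<le> p s" "\<forall>s\<in>S. 0 < chi s \<longrightarrow> 0 < p s" "\<exists>s\<in>S. 0 < chi s"
  shows "\<exists>l>0. (\<forall>s\<in>S. l * chi s \<le> p s) \<and> (\<exists>s\<in>S. 0 < chi s \<and> p s = l * chi s)"
proof -
  define P where "P = {s\<in>S. 0 < chi s}"
  have P: "finite P" "P \<noteq> {}" using assms(1,4) by (auto simp: P_def)
  define l where "l = Min ((\<lambda>s. p s / chi s) ` P)"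
  have "l \<in> (\<lambda>s. p s / chi s) ` P" unfolding l_def using P by (intro Min_in) auto
  then obtain s0 where s0: "s0 \<in> P" "l = p s0 / chi s0" by blast
  have l0: "0 < l" using s0 assms(3) by (simp add: P_def)
  have "l * chi s \<le> p s" if "s \<in> S" for s
  proof (cases "0 < chi s")
    case True
    then have "l \<le> p s / chi s" unfolding l_def using P that by (intro Min_le) (auto simp: P_def)
    then show ?thesis using True by (simp add: pos_le_divide_eq)
  next
    case False
    then have "l * chi s \<le> 0" using l0 by (simp add: mult_nonneg_nonpos)
    moreover have "0 \<le> p s" using assms(2) that by blast
    ultimately show ?thesis by linarith
  qed
  moreover have "p s0 = l * chi s0" using s0 by (simp add: P_def)
  ultimately show ?thesis using s0(1) l0 by (auto simp: P_def)
qed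

text \<open>Follow positive edges around a cycle \<open>c\<close> and subtract the largest multiple of its
  edge counts that keeps \<open>p\<close> nonnegative: at least one edge leaves the support.\<close>
lemma circulation_peel_cycle:
  assumes p: "circulation b k p" and pos: "\<exists>s\<in>strings b (Suc k). 0 < p s"
  shows "\<exists>c l. c \<noteq> [] \<and> (\<forall>x\<in>set c. x < b) \<and> 0 \<le> l \<and>
    circulation b k (\<lambda>s. p s - l * real (cycle_count (Suc k) c s)) \<and>
    {s\<in>strings b (Suc k). 0 < p s - l * real (cycle_count (Suc k) c s)} \<subset> {s\<in>strings b (Suc k). 0 < p s}"
proof -
  define E where "E = {s\<in>strings b (Suc k). 0 < p s}"
  have succ: "\<forall>e\<in>E. \<exists>e'\<in>E. butlast e' = tl e"
    using circulation_support_successor[OF p] by (auto simp: E_def)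
  obtain c where c: "c \<noteq> []" "\<forall>x\<in>set c. x < b" "\<forall>q. block (cyclic c) (Suc k) q \<in> E"
    using closed_walk_word[of E b k] pos succ by (auto simp: E_def)
  define chi where "chi s = real (cycle_count (Suc k) c s)" for s
  have supp: "\<forall>s\<in>strings b (Suc k). 0 < chi s \<longrightarrow> 0 < p s"
    using cycle_count_pos_imp_mem[OF c(3)] by (auto simp: chi_def E_def)
  have ex: "\<exists>s\<in>strings b (Suc k). 0 < chi s"
    using exists_cycle_count_pos[OF c(1,2)] by (simp add: chi_def)
  have "\<forall>s\<in>strings b (Suc k). 0 \<le> p s" using p by (simp add: circulation_def)
  then obtain l s0 where l: "0 < l" "\<forall>s\<in>strings b (Suc k). l * chi s \<le> p s"
      and s0: "s0 \<in> strings b (Suc k)" "0 < chi s0" "p s0 = l * chi s0"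
    using exists_maximal_multiple_below[OF finite_strings _ supp ex] by blast
  have "circulation b k (\<lambda>s. p s - l * chi s)"
    using p circulation_cycle_count[OF c(1,2), of k] l
    by (simp add: circulation_def chi_def sum_subtractf sum_distrib_left[symmetric])
  moreover have "{s\<in>strings b (Suc k). 0 < p s - l * chi s} \<subset> E"
  proof -
    have "{s\<in>strings b (Suc k). 0 < p s - l * chi s} \<subseteq> E - {s0}"
    proof
      fix s assume s: "s \<in> {s\<in>strings b (Suc k). 0 < p s - l * chi s}"
      have "0 \<le> l * chi s" using l(1) by (simp add: chi_def)
      then show "s \<in> E - {s0}" using s s0(3) by (auto simp: E_def)
    qed
    moreover have "s0 \<in> E" using s0 l(1) by (simp add: E_def)
    ultimately show ?thesis by blast
  qed
  ultimately show ?thesis using c l(1) unfolding chi_def E_def by (intro exI[of _ c] exI[of _ l]) auto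
qed

lemma circulation_decomposition:
  assumes "circulation b k p"
  shows "\<exists>D. (\<forall>(c,l)\<in>set D. c \<noteq> [] \<and> (\<forall>x\<in>set c. x < b) \<and> 0 \<le> l) \<and>
    (\<forall>s\<in>strings b (Suc k). p s = (\<Sum>(c,l)\<leftarrow>D. l * real (cycle_count (Suc k) c s)))"
  using assms
proof (induction "card {s\<in>strings b (Suc k). 0 < p s}" arbitrary: p rule: less_induct)
  case less
  show ?case
  proof (cases "\<exists>s\<in>strings b (Suc k). 0 < p s")
    case False
    then have "\<forall>s\<in>strings b (Suc k). p s = 0"
      using less.prems by (force simp: circulation_def)
    then show ?thesis by (intro exI[of _ "[]"]) simp
  next
    case True
    then obtain c l where c: "c \<noteq> []" "\<forall>x\<in>set c. x < b" "0 \<le> l"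
        and circ: "circulation b k (\<lambda>s. p s - l * real (cycle_count (Suc k) c s))"
        and supp: "{s\<in>strings b (Suc k). 0 < p s - l * real (cycle_count (Suc k) c s)} \<subset>
                   {s\<in>strings b (Suc k). 0 < p s}"
      using circulation_peel_cycle[OF less.prems] by blast
    have "card {s\<in>strings b (Suc k). 0 < p s - l * real (cycle_count (Suc k) c s)} <
          card {s\<in>strings b (Suc k). 0 < p s}"
      using supp finite_strings by (intro psubset_card_mono) auto
    from less.hyps[OF this circ] obtain D where
      "\<forall>(c,l)\<in>set D. c \<noteq> [] \<and> (\<forall>x\<in>set c. x < b) \<and> 0 \<le> l"
      "\<forall>s\<in>strings b (Suc k). p s - l * real (cycle_count (Suc k) c s) =
         (\<Sum>(c,l)\<leftarrow>D. l * real (cycle_count (Suc k) c s))"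
      by blast
    then show ?thesis using c by (intro exI[of _ "(c, l) # D"]) (auto simp: algebra_simps)
  qed
qed

section \<open>Sequences with prescribed block frequencies\<close>

lemma cycle_count_append:
  "\<bar>real (cycle_count k (u @ v) s) - real (cycle_count k u s) - real (cycle_count k v s)\<bar> \<le> 2 * real k"
proof -
  let ?f = "cyclic (u @ v)"
  have "cycle_count k (u @ v) s = block_count ?f k s 0 (length u) + block_count ?f k s (0 + length u) (length v)"
    unfolding cycle_count_def using block_count_add[of ?f k s 0 "length u" "length v"] by simp
  moreover have "\<bar>real (block_count ?f k s 0 (length u)) - real (cycle_count k u s)\<bar> \<le> real k"
    unfolding cycle_count_def by (rule block_count_perturb) (simp add: cyclic_def nth_append)
  moreover have "block_count ?f k s (0 + length u) (length v) = block_count (\<lambda>q. ?f (q + length u)) k s 0 (length v)"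
    by (rule block_count_shift)
  moreover have "\<bar>real (block_count (\<lambda>q. ?f (q + length u)) k s 0 (length v)) - real (cycle_count k v s)\<bar> \<le> real k"
    unfolding cycle_count_def by (rule block_count_perturb) (simp add: cyclic_def nth_append)
  ultimately show ?thesis by linarith
qed

lemma nth_concat_replicate:
  "i < m * length c \<Longrightarrow> concat (replicate m c) ! i = c ! (i mod length c)"
proof (induction m arbitrary: i)
  case (Suc m)
  show ?case
  proof (cases "i < length c")
    case False
    then have "concat (replicate (Suc m) c) ! i = c ! ((i - length c) mod length c)"
      using Suc by (simp add: nth_append)
    then show ?thesis using False by (simp add: le_mod_geq)
  qed (simp add: nth_append)
qed simp

lemma cycle_count_concat_replicate:
  "cycle_count k (concat (replicate m c)) s = m * cycle_count k c s"
proof (cases "c = [] \<or> m = 0")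
  case False
  then have len: "length (concat (replicate m c)) = m * length c" and pos: "0 < m * length c"
    by (simp_all add: length_concat sum_list_replicate)
  have "cyclic (concat (replicate m c)) = cyclic c"
  proof
    fix q
    have "cyclic (concat (replicate m c)) q = c ! (q mod (m * length c) mod length c)"
      unfolding cyclic_def len using pos by (simp add: nth_concat_replicate)
    then show "cyclic (concat (replicate m c)) q = cyclic c q" by (simp add: cyclic_def mod_mod_cancel)
  qed
  then show ?thesis
    unfolding cycle_count_def len using block_count_periodic_mult[of "cyclic c" "length c"] by simp
qed auto

definition cycle_mixture :: "(nat list \<times> real) list \<Rightarrow> nat \<Rightarrow> nat list" where
  "cycle_mixture D M = concat (map (\<lambda>(c,l). concat (replicate (nat \<lfloor>real M * l\<rfloor>) c)) D)"

lemma cycle_mixture_Cons: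
  "cycle_mixture ((c,l) # D) M = concat (replicate (nat \<lfloor>real M * l\<rfloor>) c) @ cycle_mixture D M"
  by (simp add: cycle_mixture_def)

lemma set_cycle_mixture_less:
  "\<forall>(c,l)\<in>set D. \<forall>x\<in>set c. x < b \<Longrightarrow> \<forall>x\<in>set (cycle_mixture D M). x < b"
  by (induction D) (auto simp: cycle_mixture_def)

lemma nat_floor_mult_approx:
  fixes x y :: real
  assumes "0 \<le> x" "0 \<le> y"
  shows "\<bar>real (nat \<lfloor>x\<rfloor>) * y - x * y\<bar> \<le> y"
proof -
  have "\<bar>real (nat \<lfloor>x\<rfloor>) - x\<bar> \<le> 1" using assms(1) by linarith
  then have "\<bar>real (nat \<lfloor>x\<rfloor>) - x\<bar> * y \<le> 1 * y" using assms(2) by (intro mult_right_mono)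
  then show ?thesis by (simp add: abs_mult_pos[OF assms(2)] left_diff_distrib)
qed

lemma cycle_count_cycle_mixture:
  assumes "\<forall>(c,l)\<in>set D. 0 \<le> l"
  shows "\<bar>real (cycle_count k (cycle_mixture D M) s) - real M * (\<Sum>(c,l)\<leftarrow>D. l * real (cycle_count k c s))\<bar>
           \<le> (\<Sum>(c,l)\<leftarrow>D. real (length c) + 2 * real k)"
  using assms
proof (induction D)
  case (Cons cl D)
  obtain c l where cl: "cl = (c, l)" by force
  define m where "m = nat \<lfloor>real M * l\<rfloor>"
  have "\<bar>real (cycle_count k (cycle_mixture (cl # D) M) s) - real m * real (cycle_count k c s)
          - real (cycle_count k (cycle_mixture D M) s)\<bar> \<le> 2 * real k"
    using cycle_count_append[of k "concat (replicate m c)" "cycle_mixture D M" s]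
    by (simp add: cl cycle_mixture_Cons m_def cycle_count_concat_replicate)
  moreover have "\<bar>real m * real (cycle_count k c s) - real M * l * real (cycle_count k c s)\<bar> \<le> real (length c)"
    using nat_floor_mult_approx[of "real M * l" "real (cycle_count k c s)"] Cons.prems cycle_count_le[of k c s]
    unfolding m_def cl by simp
  ultimately show ?case using Cons by (simp add: cl algebra_simps)
qed (simp add: cycle_mixture_def)

lemma length_cycle_mixture:
  assumes "\<forall>(c,l)\<in>set D. 0 \<le> l"
  shows "\<bar>real (length (cycle_mixture D M)) - real M * (\<Sum>(c,l)\<leftarrow>D. l * real (length c))\<bar>
           \<le> (\<Sum>(c,l)\<leftarrow>D. real (length c))"
  using assms
proof (induction D)
  case (Cons cl D)
  obtain c l where cl: "cl = (c, l)" by force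
  have "length (cycle_mixture (cl # D) M) = nat \<lfloor>real M * l\<rfloor> * length c + length (cycle_mixture D M)"
    by (simp add: cl cycle_mixture_Cons length_concat sum_list_replicate)
  moreover have "\<bar>real (nat \<lfloor>real M * l\<rfloor>) * real (length c) - real M * l * real (length c)\<bar> \<le> real (length c)"
    using nat_floor_mult_approx[of "real M * l" "real (length c)"] Cons.prems cl by simp
  ultimately show ?case using Cons by (simp add: cl algebra_simps)
qed (simp add: cycle_mixture_def)

lemma sum_strings_cycle_combination:
  assumes "\<forall>(c,l)\<in>set D. c \<noteq> [] \<and> (\<forall>x\<in>set c. x < b)"
  shows "(\<Sum>s\<in>strings b k. \<Sum>(c,l)\<leftarrow>D. l * real (cycle_count k c s)) = (\<Sum>(c,l)\<leftarrow>D. l * real (length c))"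
  using assms
proof (induction D)
  case (Cons cl D)
  obtain c l where cl: "cl = (c, l)" by force
  have "(\<Sum>s\<in>strings b k. cycle_count k c s) = length c"
    using sum_cycle_count_strings Cons.prems cl by auto
  then have "(\<Sum>s\<in>strings b k. l * real (cycle_count k c s)) = l * real (length c)"
    by (metis of_nat_sum sum_distrib_left)
  then show ?case using Cons by (simp add: cl sum.distrib)
qed simp

lemma Delta_bounded:
  assumes "p \<in> Delta b k" "s \<in> strings b k"
  shows "0 \<le> p s" "p s \<le> 1"
proof -
  have nn: "\<forall>s\<in>strings b k. 0 \<le> p s" and sum1: "(\<Sum>s\<in>strings b k. p s) = 1"
    using assms(1) by (auto simp: Delta_def)
  show "0 \<le> p s" using nn assms(2) by blast
  have "p s \<le> (\<Sum>s\<in>strings b k. p s)"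
    using assms(2) nn finite_strings by (intro member_le_sum) auto
  then show "p s \<le> 1" using sum1 by simp
qed

lemma exists_cycle_approx:
  assumes \<eta>: "\<eta> \<in> Delta b (Suc k)" and d: "0 < d"
  shows "\<exists>u. u \<noteq> [] \<and> (\<forall>x\<in>set u. x < b) \<and>
    (\<forall>s\<in>strings b (Suc k). \<bar>real (cycle_count (Suc k) u s) - real (length u) * \<eta> s\<bar> \<le> d * real (length u))"
proof -
  obtain D where D: "\<forall>(c,l)\<in>set D. c \<noteq> [] \<and> (\<forall>x\<in>set c. x < b) \<and> 0 \<le> l"
      and \<eta>_D: "\<forall>s\<in>strings b (Suc k). \<eta> s = (\<Sum>(c,l)\<leftarrow>D. l * real (cycle_count (Suc k) c s))"
    using circulation_decomposition[OF Delta_imp_circulation[OF \<eta>]] by blast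
  have "(\<Sum>(c,l)\<leftarrow>D. l * real (length c)) = (\<Sum>s\<in>strings b (Suc k). \<eta> s)"
    using sum_strings_cycle_combination[of D b "Suc k"] D \<eta>_D by (fastforce intro: sum.cong)
  also have "\<dots> = 1" using \<eta> by (simp add: Delta_def)
  finally have one: "(\<Sum>(c,l)\<leftarrow>D. l * real (length c)) = 1" .
  define C where "C = (\<Sum>(c,l)\<leftarrow>D. real (length c) + 2 * real (Suc k))"
  have CC: "(\<Sum>(c,l)\<leftarrow>D. real (length c)) \<le> C" and C0: "0 \<le> C"
    unfolding C_def by (induction D) auto
  define M where "M = nat \<lceil>C + 2 * C / d\<rceil> + 1"
  define u where "u = cycle_mixture D M"
  have l0: "\<forall>(c,l)\<in>set D. 0 \<le> l" using D by auto
  have count: "\<bar>real (cycle_count (Suc k) u s) - real M * \<eta> s\<bar> \<le> C" if "s \<in> strings b (Suc k)" for s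
    using cycle_count_cycle_mixture[OF l0, of "Suc k" M s] \<eta>_D that unfolding u_def C_def by simp
  have len: "\<bar>real (length u) - real M\<bar> \<le> C"
    using length_cycle_mixture[OF l0, of M] one CC unfolding u_def by simp
  have "2 * C / d < real (length u)" using len unfolding M_def by linarith
  moreover have "0 \<le> 2 * C / d" using C0 d by simp
  ultimately have long: "2 * C \<le> d * real (length u)" and "u \<noteq> []"
    using d by (auto simp: field_simps)
  moreover have "\<forall>x\<in>set u. x < b"
    unfolding u_def by (rule set_cycle_mixture_less) (use D in auto)
  moreover have "\<bar>real (cycle_count (Suc k) u s) - real (length u) * \<eta> s\<bar> \<le> d * real (length u)"
    if s: "s \<in> strings b (Suc k)" for s
  proof -
    have "\<bar>real (length u) * \<eta> s - real M * \<eta> s\<bar> \<le> C * 1"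
      unfolding left_diff_distrib[symmetric] abs_mult
      using len Delta_bounded[OF \<eta> s] by (intro mult_mono) auto
    then show ?thesis using count[OF s] long by linarith
  qed
  ultimately show ?thesis by blast
qed

lemma block_count_cyclic_approx:
  assumes u: "u \<noteq> []" and \<eta>: "0 \<le> \<eta>" "\<eta> \<le> 1" and d: "0 \<le> d"
    and approx: "\<bar>real (cycle_count k u s) - real (length u) * \<eta>\<bar> \<le> d * real (length u)"
  shows "\<bar>real (block_count (cyclic u) k s 0 n) - real n * \<eta>\<bar> \<le> d * real n + real (length u)"
proof -
  define L where "L = length u"
  define q where "q = n div L"
  define r where "r = n mod L"
  have n: "n = q * L + r" and rL: "r < L" using u by (simp_all add: q_def r_def L_def)
  define X where "X = real q * real (cycle_count k u s) - real q * real L * \<eta>"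
  define Y where "Y = real (block_count (cyclic u) k s (q * L) r) - real r * \<eta>"
  have "block_count (cyclic u) k s 0 n = q * cycle_count k u s + block_count (cyclic u) k s (q * L) r"
    using block_count_add[of "cyclic u" k s 0 "q * L" r] n
      block_count_periodic_mult[of "cyclic u" L k s q] by (simp add: L_def cycle_count_def)
  then have eq: "real (block_count (cyclic u) k s 0 n) - real n * \<eta> = X + Y"
    unfolding X_def Y_def by (subst (2) n) (simp add: algebra_simps)
  have "\<bar>X\<bar> \<le> d * real n"
  proof -
    have "\<bar>X\<bar> = real q * \<bar>real (cycle_count k u s) - real L * \<eta>\<bar>"
      unfolding X_def by (simp add: abs_mult right_diff_distrib[symmetric] mult.assoc)
    also have "\<dots> \<le> real q * (d * real L)" using approx by (intro mult_left_mono) (auto simp: L_def)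
    also have "\<dots> \<le> d * real n" using n d by (simp add: algebra_simps)
    finally show ?thesis .
  qed
  moreover have "\<bar>Y\<bar> \<le> real L"
  proof -
    have "0 \<le> real r * \<eta>" "real r * \<eta> \<le> real r"
      using \<eta>(1) mult_left_le[OF \<eta>(2), of "real r"] by simp_all
    moreover have "real (block_count (cyclic u) k s (q * L) r) \<le> real r"
      using block_count_le[of "cyclic u" k s "q * L" r] by simp
    ultimately show ?thesis using rL unfolding Y_def by linarith
  qed
  ultimately have "\<bar>X + Y\<bar> \<le> d * real n + real (length u)"
    using abs_triangle_ineq[of X Y] unfolding L_def by linarith
  then show ?thesis by (simp only: eq)
qed

lemma exists_seq_block_count_approx:
  assumes \<eta>: "\<eta> \<in> Delta b (Suc k)" and d: "0 < d"
  shows "\<exists>f K. (\<forall>q. f q < b) \<and>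
    (\<forall>n\<ge>K. \<forall>s\<in>strings b (Suc k). \<bar>real (block_count f (Suc k) s 0 n) - real n * \<eta> s\<bar> \<le> d * real n)"
proof -
  obtain u where u: "u \<noteq> []" "\<forall>x\<in>set u. x < b"
    "\<forall>s\<in>strings b (Suc k). \<bar>real (cycle_count (Suc k) u s) - real (length u) * \<eta> s\<bar> \<le> d / 2 * real (length u)"
    using exists_cycle_approx[OF \<eta>, of "d / 2"] d by auto
  define K where "K = nat \<lceil>2 * real (length u) / d\<rceil>"
  have "\<bar>real (block_count (cyclic u) (Suc k) s 0 n) - real n * \<eta> s\<bar> \<le> d * real n"
    if n: "K \<le> n" and s: "s \<in> strings b (Suc k)" for n s
  proof -
    have "\<bar>real (block_count (cyclic u) (Suc k) s 0 n) - real n * \<eta> s\<bar> \<le> d / 2 * real n + real (length u)"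
      using block_count_cyclic_approx[OF u(1) Delta_bounded[OF \<eta> s] _ u(3)[rule_format, OF s]] d
      by simp
    moreover have "2 * real (length u) / d \<le> real n" using n unfolding K_def by linarith
    then have "real (length u) \<le> d / 2 * real n" using d by (simp add: field_simps)
    ultimately show ?thesis by linarith
  qed
  then show ?thesis using cyclic_less[OF u(1,2)] by blast
qed

lemma block_count_approx_prefix:
  assumes approx: "\<forall>n\<ge>K. \<bar>real (block_count f k s 0 n) - real n * \<eta>\<bar> \<le> d * real n"
    and \<eta>: "0 \<le> \<eta>" "\<eta> \<le> 1" and d: "0 < d" and g: "\<And>q. g (q + N0) = f q"
    and m: "N0 + K + nat \<lceil>real N0 / d\<rceil> \<le> m"
  shows "\<bar>real (block_count g k s 0 m) - real m * \<eta>\<bar> \<le> 2 * d * real m"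
proof -
  have "(\<lambda>q. g (q + N0)) = f" using g by blast
  then have split: "block_count g k s 0 m = block_count g k s 0 N0 + block_count f k s 0 (m - N0)"
    using block_count_add[of g k s 0 N0 "m - N0"] block_count_shift[of g k s 0 N0 "m - N0"] m by simp
  define A where "A = real (block_count g k s 0 N0) - real N0 * \<eta>"
  define B where "B = real (block_count f k s 0 (m - N0)) - real (m - N0) * \<eta>"
  have "real m * \<eta> = real N0 * \<eta> + real (m - N0) * \<eta>"
    using m by (simp flip: distrib_right)
  then have eq: "real (block_count g k s 0 m) - real m * \<eta> = A + B"
    unfolding split A_def B_def by simp
  have "\<bar>B\<bar> \<le> d * real m"
  proof -
    have "K \<le> m - N0" using m by simp
    then have "\<bar>B\<bar> \<le> d * real (m - N0)" using approx unfolding B_def by blast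
    also have "\<dots> \<le> d * real m" using d by (intro mult_left_mono) auto
    finally show ?thesis .
  qed
  moreover have "\<bar>A\<bar> \<le> d * real m"
  proof -
    have "0 \<le> real N0 * \<eta>" "real N0 * \<eta> \<le> real N0"
      using \<eta>(1) mult_left_le[OF \<eta>(2), of "real N0"] by simp_all
    moreover have "real (block_count g k s 0 N0) \<le> real N0"
      using block_count_le[of g k s 0 N0] by simp
    moreover have "real N0 / d \<le> real m" using m by linarith
    then have "real N0 \<le> d * real m" using d by (simp add: divide_le_eq mult.commute)
    ultimately show ?thesis unfolding A_def by linarith
  qed
  ultimately have "\<bar>A + B\<bar> \<le> 2 * d * real m" using abs_triangle_ineq[of A B] by linarith
  then show ?thesis by (simp only: eq)
qed

section \<open>Base-\<open>b\<close> digits\<close>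

text \<open>The largest integer strictly below \<open>b ^ n * x\<close>: for \<open>x > 0\<close> it is the integer
  whose base-\<open>b\<close> digits are the first \<open>n\<close> digits of the nonterminating expansion of \<open>x\<close>.\<close>
definition adic_trunc :: "nat \<Rightarrow> real \<Rightarrow> nat \<Rightarrow> int" where
  "adic_trunc b x n = \<lceil>real b ^ n * x\<rceil> - 1"

definition adic_digit :: "nat \<Rightarrow> real \<Rightarrow> nat \<Rightarrow> nat" where
  "adic_digit b x n = nat (adic_trunc b x (Suc n) - int b * adic_trunc b x n)"

fun adic_value :: "nat \<Rightarrow> (nat \<Rightarrow> nat) \<Rightarrow> nat \<Rightarrow> nat" where
  "adic_value b e 0 = 0"
| "adic_value b e (Suc n) = b * adic_value b e n + e n"

lemma adic_trunc_bounds: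
  "real_of_int (adic_trunc b x n) < real b ^ n * x" "real b ^ n * x \<le> real_of_int (adic_trunc b x n) + 1"
  unfolding adic_trunc_def by linarith+

lemma adic_trunc_eqI:
  "real_of_int z < real b ^ n * x \<Longrightarrow> real b ^ n * x \<le> real_of_int z + 1 \<Longrightarrow> adic_trunc b x n = z"
  unfolding adic_trunc_def by (subst ceiling_unique[of "z + 1"]) auto

lemma adic_trunc_Suc_bounds:
  assumes "0 < b"
  shows "int b * adic_trunc b x n \<le> adic_trunc b x (Suc n)"
    "adic_trunc b x (Suc n) < int b * adic_trunc b x n + int b"
proof -
  have "real b * real_of_int (adic_trunc b x n) < real b * (real b ^ n * x)"
    using adic_trunc_bounds(1)[where b=b and x=x and n=n] assms by simp
  moreover have "real b * (real b ^ n * x) \<le> real b * (real_of_int (adic_trunc b x n) + 1)"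
    using adic_trunc_bounds(2)[where b=b and x=x and n=n] assms by simp
  ultimately have "real_of_int (int b * adic_trunc b x n) < real b ^ Suc n * x"
    "real b ^ Suc n * x \<le> real_of_int (int b * adic_trunc b x n + int b)"
    by (simp_all add: algebra_simps)
  then show "int b * adic_trunc b x n \<le> adic_trunc b x (Suc n)"
    "adic_trunc b x (Suc n) < int b * adic_trunc b x n + int b"
    using adic_trunc_bounds[where b=b and x=x and n="Suc n"] by linarith+
qed

lemma adic_digit_less: "0 < b \<Longrightarrow> adic_digit b x n < b"
  using adic_trunc_Suc_bounds[of b x n] by (simp add: adic_digit_def)

lemma adic_trunc_Suc:
  "0 < b \<Longrightarrow> adic_trunc b x (Suc n) = int b * adic_trunc b x n + int (adic_digit b x n)"
  using adic_trunc_Suc_bounds[of b x n] by (simp add: adic_digit_def)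

lemma adic_trunc_eq_adic_value:
  assumes "0 < b" "x \<in> {0<..1}"
  shows "adic_trunc b x n = int (adic_value b (adic_digit b x) n)"
proof (induction n)
  case 0
  show ?case using assms(2) by (intro adic_trunc_eqI) auto
qed (simp add: adic_trunc_Suc[OF assms(1)])

lemma adic_value_eq_partial_sum:
  assumes "0 < b"
  shows "real (adic_value b e N) = real b ^ N * (\<Sum>n<N. real (e n) / real b ^ Suc n)"
  by (induction N) (use assms in \<open>simp_all add: algebra_simps\<close>)

lemma adic_value_bounds:
  assumes "\<forall>q. e q < b"
  shows "adic_value b e n * b ^ d \<le> adic_value b e (n + d) \<and>
    adic_value b e (n + d) < (adic_value b e n + 1) * b ^ d"
proof (induction d)
  case (Suc d)
  have "adic_value b e n * b ^ Suc d = b * (adic_value b e n * b ^ d)" by simp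
  also have "\<dots> \<le> b * adic_value b e (n + d)" using Suc by simp
  also have "\<dots> \<le> adic_value b e (n + Suc d)" by simp
  finally have lower: "adic_value b e n * b ^ Suc d \<le> adic_value b e (n + Suc d)" .
  have "adic_value b e (n + Suc d) < b * (adic_value b e (n + d) + 1)"
    using assms by simp
  also have "\<dots> \<le> b * ((adic_value b e n + 1) * b ^ d)"
    using Suc by (intro mult_left_mono) auto
  also have "\<dots> = (adic_value b e n + 1) * b ^ Suc d" by (simp add: algebra_simps)
  finally show ?case using lower by blast
qed simp

lemma adic_value_cong: "(\<And>q. q < n \<Longrightarrow> e q = e' q) \<Longrightarrow> adic_value b e n = adic_value b e' n"
  by (induction n) auto

lemma adic_trunc_tendsto:
  assumes "2 \<le> b"
  shows "(\<lambda>N. real_of_int (adic_trunc b x N) / real b ^ N) \<longlonglongrightarrow> x"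
proof -
  have bound: "\<bar>real_of_int (adic_trunc b x N) / real b ^ N - x\<bar> \<le> (1 / real b) ^ N" for N
  proof -
    have pos: "0 < real b ^ N" using assms by simp
    have "real_of_int (adic_trunc b x N) / real b ^ N < x"
      using adic_trunc_bounds(1)[where b=b and x=x and n=N] pos by (simp add: pos_divide_less_eq mult.commute)
    moreover have "x \<le> real_of_int (adic_trunc b x N) / real b ^ N + 1 / real b ^ N"
      using adic_trunc_bounds(2)[where b=b and x=x and n=N] pos
      by (simp add: add_divide_distrib[symmetric] pos_le_divide_eq mult.commute)
    ultimately show ?thesis unfolding power_one_over abs_le_iff by linarith
  qed
  have "(\<lambda>N. (1 / real b) ^ N) \<longlonglongrightarrow> 0"
    by (rule LIMSEQ_power_zero) (use assms in simp)
  then have "(\<lambda>N. real_of_int (adic_trunc b x N) / real b ^ N - x) \<longlonglongrightarrow> 0"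
    by (rule Lim_null_comparison[rotated]) (simp add: bound)
  then show ?thesis by (simp add: LIM_zero_iff)
qed

lemma adic_digit_sums:
  assumes "2 \<le> b" "x \<in> {0<..1}"
  shows "(\<lambda>n. real (adic_digit b x n) / real b ^ Suc n) sums x"
proof -
  have "(\<Sum>n<N. real (adic_digit b x n) / real b ^ Suc n) = real_of_int (adic_trunc b x N) / real b ^ N" for N
    using adic_value_eq_partial_sum[of b "adic_digit b x" N] adic_trunc_eq_adic_value[of b x N] assms
    by simp
  then show ?thesis unfolding sums_def using adic_trunc_tendsto[OF assms(1)] by simp
qed

lemma adic_digit_nonterminating:
  assumes "2 \<le> b" "x \<in> {0<..1}"
  shows "\<exists>n\<ge>m. adic_digit b x n \<noteq> 0"
proof (rule ccontr)
  assume "\<not> (\<exists>n\<ge>m. adic_digit b x n \<noteq> 0)"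
  then have "(\<lambda>n. real (adic_digit b x n) / real b ^ Suc n) sums (\<Sum>n<m. real (adic_digit b x n) / real b ^ Suc n)"
    by (intro sums_finite) auto
  then have "x = real_of_int (adic_trunc b x m) / real b ^ m"
    using sums_unique2[OF adic_digit_sums[OF assms]] adic_value_eq_partial_sum[of b "adic_digit b x" m]
      adic_trunc_eq_adic_value[of b x m] assms by simp
  then show False using adic_trunc_bounds(1)[where b=b and x=x and n=m] assms by (simp add: field_simps)
qed

text \<open>The tail of a nonterminating expansion is positive, so \<open>b ^ N * x\<close> lies strictly
  above the integer formed by the first \<open>N\<close> digits, and at most \<open>1\<close> above it.\<close>
lemma nonterminating_expansion_adic_trunc:
  assumes b: "2 \<le> b" and e: "\<forall>n. e n < b" "(\<lambda>n. real (e n) / real b ^ Suc n) sums x"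
    and nt: "\<forall>m. \<exists>n\<ge>m. e n \<noteq> 0"
  shows "adic_trunc b x N = int (adic_value b e N)"
proof -
  define f where "f n = real (e n) / real b ^ Suc n" for n
  define T where "T = x - (\<Sum>n<N. f n)"
  have fs: "f sums x" unfolding f_def by (rule e(2))
  then have Ts: "(\<lambda>i. f (i + N)) sums T"
    using sums_iff_shift[of f N T] by (simp add: T_def)
  have "(\<lambda>i. (real b - 1) / real b ^ Suc N * (1 / real b) ^ i) sums
      ((real b - 1) / real b ^ Suc N * (1 / (1 - 1 / real b)))"
    using b by (intro sums_mult geometric_sums) auto
  moreover have "(real b - 1) / real b ^ Suc N * (1 / (1 - 1 / real b)) = 1 / real b ^ N"
    using b by (simp add: field_simps)
  ultimately have geo: "(\<lambda>i. (real b - 1) / real b ^ Suc N * (1 / real b) ^ i) sums (1 / real b ^ N)"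
    by metis
  have "f (i + N) \<le> (real b - 1) / real b ^ Suc N * (1 / real b) ^ i" for i
  proof -
    have "Suc (e (i + N)) \<le> b" using e(1) by (simp add: Suc_le_eq)
    then have "real (Suc (e (i + N))) \<le> real b" by (simp only: of_nat_le_iff)
    then have "real (e (i + N)) \<le> real b - 1" by simp
    then show ?thesis using b by (simp add: f_def field_simps power_add divide_right_mono)
  qed
  then have T1: "T \<le> 1 / real b ^ N" using sums_le[OF _ Ts geo] by auto
  obtain n where n: "N \<le> n" "e n \<noteq> 0" using nt by blast
  have "0 < T"
    unfolding sums_unique[OF Ts]
    by (rule suminf_pos2[where i="n - N"]) (use Ts n b in \<open>auto simp: f_def sums_summable\<close>)
  moreover have "real b ^ N * x = real (adic_value b e N) + real b ^ N * T"
    using adic_value_eq_partial_sum[of b e N] b by (simp add: T_def f_def algebra_simps)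
  ultimately show ?thesis using T1 b by (intro adic_trunc_eqI) (auto simp: field_simps)
qed

lemma digit_seq_eq_adic_digit:
  assumes "2 \<le> b" "x \<in> {0<..1}"
  shows "digit_seq b x = adic_digit b x"
  unfolding digit_seq_def
proof (rule the_equality)
  show "(\<forall>n. adic_digit b x n < b) \<and> (\<lambda>n. real (adic_digit b x n) / real b ^ Suc n) sums x \<and>
        (\<forall>m. \<exists>n\<ge>m. adic_digit b x n \<noteq> 0)"
    using adic_digit_less adic_digit_sums[OF assms] adic_digit_nonterminating[OF assms] assms(1) by simp
  fix e assume e: "(\<forall>n. e n < b) \<and> (\<lambda>n. real (e n) / real b ^ Suc n) sums x \<and> (\<forall>m. \<exists>n\<ge>m. e n \<noteq> 0)"
  have "adic_value b e N = adic_value b (adic_digit b x) N" for N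
    using nonterminating_expansion_adic_trunc[OF assms(1)] e adic_trunc_eq_adic_value[of b x N] assms
    by (metis of_nat_eq_iff not_numeral_le_zero not_gr_zero)
  then show "e = adic_digit b x"
    by (metis add_left_cancel adic_value.simps(2) ext)
qed

lemma digit_seq_less: "2 \<le> b \<Longrightarrow> x \<in> {0<..1} \<Longrightarrow> digit_seq b x p < b"
  by (simp add: digit_seq_eq_adic_digit adic_digit_less)

lemma adic_trunc_eq_adic_value_prefix:
  assumes "2 \<le> b" "\<forall>q. e q < b" "n \<le> N"
    and "real (adic_value b e N) < real b ^ N * x" "real b ^ N * x \<le> real (adic_value b e N) + 1"
  shows "adic_trunc b x n = int (adic_value b e n)"
proof (rule adic_trunc_eqI)
  obtain d where d: "N = n + d" using assms(3) le_Suc_ex by blast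
  have pos: "0 < real b ^ d" using assms(1) by simp
  have "adic_value b e n * b ^ d \<le> adic_value b e N" "adic_value b e N + 1 \<le> (adic_value b e n + 1) * b ^ d"
    using adic_value_bounds[OF assms(2), of n d] d by auto
  then have "real (adic_value b e n * b ^ d) \<le> real (adic_value b e N)"
    "real (adic_value b e N + 1) \<le> real ((adic_value b e n + 1) * b ^ d)"
    by (simp_all only: of_nat_le_iff)
  then have lo: "real b ^ d * real (adic_value b e n) \<le> real (adic_value b e N)"
    and hi: "real (adic_value b e N) + 1 \<le> real b ^ d * (real (adic_value b e n) + 1)"
    by (simp_all add: algebra_simps)
  have eq: "real b ^ N * x = real b ^ d * (real b ^ n * x)" using d by (simp add: power_add)
  have "real b ^ d * real (adic_value b e n) < real b ^ d * (real b ^ n * x)"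
    using lo assms(4) eq by linarith
  then show "real_of_int (int (adic_value b e n)) < real b ^ n * x" using pos by simp
  have "real b ^ d * (real b ^ n * x) \<le> real b ^ d * (real (adic_value b e n) + 1)"
    using hi assms(5) eq by linarith
  then show "real b ^ n * x \<le> real_of_int (int (adic_value b e n)) + 1" using pos by simp
qed

lemma exists_interval_with_digit_prefix:
  assumes b: "2 \<le> b" and x0: "x0 \<in> {0<..1}" and e: "\<forall>q. e q < b"
    and pre: "\<forall>q<N0. e q = digit_seq b x0 q" and N: "N0 \<le> N" and r: "1 / real b ^ N0 < r"
  shows "\<exists>c d. c < d \<and> {c<..<d} \<subseteq> {0<..1} \<and> {c<..<d} \<subseteq> ball x0 r \<and>
           (\<forall>x\<in>{c<..<d}. \<forall>q<N. digit_seq b x q = e q)"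
proof -
  define P where "P = adic_value b e N"
  have pos: "0 < real b ^ N" using b by simp
  have "P + 1 \<le> b ^ N" using adic_value_bounds[OF e, of 0 N] by (simp add: P_def)
  then have "real (P + 1) \<le> real (b ^ N)" by (simp only: of_nat_le_iff)
  then have P1: "real P + 1 \<le> real b ^ N" by simp
  define c where "c = real P / real b ^ N"
  define d where "d = (real P + 1) / real b ^ N"
  have bounds: "real P < real b ^ N * x" "real b ^ N * x \<le> real P + 1" if "x \<in> {c<..<d}" for x
    using that pos by (auto simp: c_def d_def field_simps)
  have "0 \<le> c" "d \<le> 1" using P1 pos by (simp_all add: c_def d_def)
  then have sub: "{c<..<d} \<subseteq> {0<..1}" by auto
  have trunc: "adic_trunc b x n = int (adic_value b e n)" if "x \<in> {c<..<d}" "n \<le> N" for x n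
    using adic_trunc_eq_adic_value_prefix[OF b e that(2) bounds[OF that(1), unfolded P_def]] .
  have "digit_seq b x q = e q" if x: "x \<in> {c<..<d}" and q: "q < N" for x q
    using trunc[OF x, of q] trunc[OF x, of "Suc q"] q sub x b
    by (simp add: digit_seq_eq_adic_digit adic_digit_def subset_eq)
  moreover have "{c<..<d} \<subseteq> ball x0 r"
  proof
    fix x assume x: "x \<in> {c<..<d}"
    have "adic_trunc b x N0 = adic_trunc b x0 N0"
      using trunc[OF x N] adic_trunc_eq_adic_value[of b x0 N0] adic_value_cong[of N0 e] pre x0 b
      by (simp add: digit_seq_eq_adic_digit)
    then have "\<bar>real b ^ N0 * x - real b ^ N0 * x0\<bar> < 1"
      using adic_trunc_bounds[where b=b and x=x and n=N0] adic_trunc_bounds[where b=b and x=x0 and n=N0]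
      by linarith
    then have "real b ^ N0 * \<bar>x - x0\<bar> < 1" by (simp add: abs_mult right_diff_distrib[symmetric])
    then have "\<bar>x - x0\<bar> < 1 / real b ^ N0" using b by (simp add: field_simps)
    then show "x \<in> ball x0 r" using r by (simp add: dist_real_def abs_minus_commute)
  qed
  moreover have "c < d" using pos by (simp add: c_def d_def divide_strict_right_mono)
  ultimately show ?thesis using sub by blast
qed

section \<open>Talagrand's characterization of meager ideals\<close>

definition cylinder :: "nat \<Rightarrow> (nat \<Rightarrow> bool) \<Rightarrow> (nat \<Rightarrow> bool) set" where
  "cylinder n g = {h. \<forall>i<n. h i = g i}"

lemma topspace_cantor_space [simp]: "topspace cantor_space = UNIV"
  by (simp add: cantor_space_def PiE_UNIV_domain)

lemma openin_cylinder: "openin cantor_space (cylinder n g)"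
proof (induction n)
  case 0
  then show ?case using openin_topspace[of cantor_space] by (simp add: cylinder_def)
next
  case (Suc n)
  have "openin cantor_space {h \<in> topspace cantor_space. h n \<in> {g n}}"
    unfolding cantor_space_def
    by (rule openin_continuous_map_preimage[OF continuous_map_product_projection]) auto
  moreover have "cylinder (Suc n) g = cylinder n g \<inter> {h \<in> topspace cantor_space. h n \<in> {g n}}"
    by (auto simp: cylinder_def less_Suc_eq)
  ultimately show ?case using Suc by (simp add: openin_Int)
qed

lemma cylinder_antimono: "n \<le> n' \<Longrightarrow> \<forall>i<n. g' i = g i \<Longrightarrow> cylinder n' g' \<subseteq> cylinder n g"
  by (auto simp: cylinder_def)

lemma openin_cantor_space_contains_cylinder:
  assumes "openin cantor_space U" "h \<in> U"
  shows "\<exists>n. cylinder n h \<subseteq> U"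
proof -
  obtain V where V: "finite {i. V i \<noteq> UNIV}" "h \<in> Pi\<^sub>E UNIV V" "Pi\<^sub>E UNIV V \<subseteq> U"
    using assms unfolding cantor_space_def openin_product_topology_alt by auto
  define n where "n = Suc (Max (insert 0 {i. V i \<noteq> UNIV}))"
  have n: "i < n" if "V i \<noteq> UNIV" for i
    using V(1) that unfolding n_def by (simp add: le_imp_less_Suc)
  have "cylinder n h \<subseteq> Pi\<^sub>E UNIV V"
  proof
    fix x assume x: "x \<in> cylinder n h"
    have "x i \<in> V i" for i
      using x n[of i] V(2) by (cases "V i = UNIV") (auto simp: cylinder_def PiE_UNIV_domain)
    then show "x \<in> Pi\<^sub>E UNIV V" by (simp add: PiE_UNIV_domain)
  qed
  then show ?thesis using V(3) by blast
qed

lemma nowhere_dense_avoid_cylinder: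
  assumes "nowhere_dense_in cantor_space S"
  shows "\<exists>n' g'. n \<le> n' \<and> (\<forall>i<n. g' i = g i) \<and> cylinder n' g' \<inter> S = {}"
proof -
  have "\<not> cylinder n g \<subseteq> cantor_space closure_of S"
  proof
    assume "cylinder n g \<subseteq> cantor_space closure_of S"
    then have "cylinder n g \<subseteq> cantor_space interior_of (cantor_space closure_of S)"
      using openin_cylinder by (rule interior_of_maximal)
    moreover have "g \<in> cylinder n g" by (simp add: cylinder_def)
    ultimately show False using assms by (auto simp: nowhere_dense_in_def)
  qed
  then obtain g' where g': "g' \<in> cylinder n g" "g' \<notin> cantor_space closure_of S" by auto
  then obtain T where T: "g' \<in> T" "openin cantor_space T" "T \<inter> S = {}"
    unfolding in_closure_of by auto
  obtain n'' where "cylinder n'' g' \<subseteq> T"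
    using openin_cantor_space_contains_cylinder[OF T(2,1)] by blast
  moreover have "cylinder (max n n'') g' \<subseteq> cylinder n'' g'" by (rule cylinder_antimono) auto
  ultimately have "cylinder (max n n'') g' \<inter> S = {}" using T(3) by blast
  moreover have "\<forall>i<n. g' i = g i" using g'(1) by (simp add: cylinder_def)
  ultimately show ?thesis by (intro exI[of _ "max n n''"] exI[of _ g']) auto
qed

lemma nowhere_dense_family_avoid_cylinder:
  fixes G :: "nat \<Rightarrow> (nat \<Rightarrow> bool) set"
  assumes "\<And>m. nowhere_dense_in cantor_space (G m)"
  shows "\<exists>n' g'. n \<le> n' \<and> (\<forall>i<n. g' i = g i) \<and> (\<forall>m\<le>j. cylinder n' g' \<inter> G m = {})"
proof (induction j)
  case 0
  then show ?case using nowhere_dense_avoid_cylinder[OF assms[of 0], of n g] by auto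
next
  case (Suc j)
  then obtain n' g' where ng: "n \<le> n'" "\<forall>i<n. g' i = g i" "\<forall>m\<le>j. cylinder n' g' \<inter> G m = {}"
    by blast
  obtain n'' g'' where ng': "n' \<le> n''" "\<forall>i<n'. g'' i = g' i" "cylinder n'' g'' \<inter> G (Suc j) = {}"
    using nowhere_dense_avoid_cylinder[OF assms[of "Suc j"], of n' g'] by blast
  have "cylinder n'' g'' \<subseteq> cylinder n' g'" using ng' by (intro cylinder_antimono) auto
  then show ?case
    using ng ng' by (intro exI[of _ n''] exI[of _ g'']) (auto simp: le_Suc_eq)
qed

lemma exists_common_avoiding_extension:
  fixes G :: "nat \<Rightarrow> (nat \<Rightarrow> bool) set"
  assumes "\<And>m. nowhere_dense_in cantor_space (G m)"
  shows "\<exists>T'. T < T' \<and> (\<forall>\<sigma>\<subseteq>{..<T}. \<exists>g. (\<forall>i<T. g i = (i \<in> \<sigma>)) \<and> (\<forall>m\<le>j. cylinder T' g \<inter> G m = {}))"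
proof -
  have "\<forall>\<sigma>\<in>Pow {..<T}. \<exists>ng. T \<le> fst ng \<and> (\<forall>i<T. snd ng i = (i \<in> \<sigma>)) \<and>
      (\<forall>m\<le>j. cylinder (fst ng) (snd ng) \<inter> G m = {})"
    using nowhere_dense_family_avoid_cylinder[OF assms] by fastforce
  then obtain F where F: "\<forall>\<sigma>\<in>Pow {..<T}. T \<le> fst (F \<sigma>) \<and> (\<forall>i<T. snd (F \<sigma>) i = (i \<in> \<sigma>)) \<and>
      (\<forall>m\<le>j. cylinder (fst (F \<sigma>)) (snd (F \<sigma>)) \<inter> G m = {})"
    by (rule bchoice[elim_format]) blast
  define T' where "T' = Suc (Max (insert T (fst ` F ` Pow {..<T})))"
  have le: "fst (F \<sigma>) < T'" if "\<sigma> \<in> Pow {..<T}" for \<sigma>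
    unfolding T'_def using that by (simp add: le_imp_less_Suc)
  have "\<exists>g. (\<forall>i<T. g i = (i \<in> \<sigma>)) \<and> (\<forall>m\<le>j. cylinder T' g \<inter> G m = {})" if "\<sigma> \<subseteq> {..<T}" for \<sigma>
  proof -
    have "cylinder T' (snd (F \<sigma>)) \<subseteq> cylinder (fst (F \<sigma>)) (snd (F \<sigma>))"
      using le[of \<sigma>] that by (intro cylinder_antimono) auto
    then show ?thesis using F that by (intro exI[of _ "snd (F \<sigma>)"]) blast
  qed
  moreover have "T < T'" unfolding T'_def by (simp add: le_imp_less_Suc)
  ultimately show ?thesis by blast
qed

definition avoiding_partition :: "(nat \<Rightarrow> (nat \<Rightarrow> bool) set) \<Rightarrow> (nat \<Rightarrow> nat) \<Rightarrow> bool" where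
  "avoiding_partition G t \<longleftrightarrow> strict_mono t \<and>
     (\<forall>j. \<forall>\<sigma>\<subseteq>{..<t j}. \<exists>g. (\<forall>i<t j. g i = (i \<in> \<sigma>)) \<and> (\<forall>m\<le>j. cylinder (t (Suc j)) g \<inter> G m = {}))"

lemma exists_avoiding_partition:
  fixes G :: "nat \<Rightarrow> (nat \<Rightarrow> bool) set"
  assumes "\<And>m. nowhere_dense_in cantor_space (G m)"
  shows "\<exists>t. avoiding_partition G t"
proof -
  define Q where "Q j T T' \<longleftrightarrow> T < T' \<and> (\<forall>\<sigma>\<subseteq>{..<T}. \<exists>g. (\<forall>i<T. g i = (i \<in> \<sigma>)) \<and>
      (\<forall>m\<le>j. cylinder T' g \<inter> G m = {}))" for j T T'
  define t where "t = rec_nat 0 (\<lambda>j T. SOME T'. Q j T T')"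
  have "Q j (t j) (t (Suc j))" for j
  proof -
    have "\<exists>T'. Q j (t j) T'" unfolding Q_def by (rule exists_common_avoiding_extension[OF assms])
    then show ?thesis unfolding t_def by (simp add: someI_ex)
  qed
  then show ?thesis unfolding Q_def avoiding_partition_def by (metis strict_monoI_Suc)
qed

definition infinitely_many_blocks :: "(nat \<Rightarrow> nat) \<Rightarrow> nat set \<Rightarrow> bool" where
  "infinitely_many_blocks t A \<longleftrightarrow> (\<forall>J. \<exists>j\<ge>J. {t j..<t (Suc j)} \<subseteq> A)"

lemma UN_increments_Int_lessThan:
  assumes P0: "P 0 = {}" and PS: "\<And>j. P (Suc j) = P j \<union> Q j"
    and Q: "\<And>j. Q j \<subseteq> {t j..<t (Suc j)}" and t: "mono t"
  shows "(\<Union>j. P j) \<inter> {..<t j} = P j"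
proof -
  have below: "P j \<subseteq> {..<t j}" for j
  proof (induction j)
    case (Suc j)
    then show ?case using Q[of j] monoD[OF t, of j "Suc j"] by (auto simp: PS)
  qed (simp add: P0)
  have grow: "P i \<subseteq> P (i + d)" for i d by (induction d) (auto simp: PS)
  have stable: "P (j + d) \<inter> {..<t j} = P j" for d
  proof (induction d)
    case (Suc d)
    have "Q (j + d) \<inter> {..<t j} = {}" using Q[of "j + d"] monoD[OF t, of j "j + d"] by (force simp: subset_iff)
    then show ?case using Suc by (auto simp: PS)
  qed (use below in auto)
  have "P j' \<inter> {..<t j} \<subseteq> P j" for j'
  proof (cases "j' \<le> j")
    case True
    then show ?thesis using grow[of j' "j - j'"] by auto
  next
    case False
    then have "j' = j + (j' - j)" by simp
    then show ?thesis using stable[of "j' - j"] by simp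
  qed
  then show ?thesis using below by blast
qed

text \<open>\<open>B\<close> is built block by block: on each block of \<open>t\<close> contained in \<open>A\<close> it follows the
  extension that moves its indicator out of \<open>G 0, \<dots>, G j\<close>.\<close>
lemma infinitely_many_blocks_avoiding_subset:
  fixes G :: "nat \<Rightarrow> (nat \<Rightarrow> bool) set"
  assumes t: "avoiding_partition G t" and A: "infinitely_many_blocks t A"
  shows "\<exists>B\<subseteq>A. \<forall>m. (\<lambda>n. n \<in> B) \<notin> G m"
proof -
  define g where "g j \<sigma> = (SOME g. (\<forall>i<t j. g i = (i \<in> \<sigma>)) \<and> (\<forall>m\<le>j. cylinder (t (Suc j)) g \<inter> G m = {}))"
    for j \<sigma>
  have g: "(\<forall>i<t j. g j \<sigma> i = (i \<in> \<sigma>)) \<and> (\<forall>m\<le>j. cylinder (t (Suc j)) (g j \<sigma>) \<inter> G m = {})"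
    if "\<sigma> \<subseteq> {..<t j}" for j \<sigma>
  proof -
    have "\<exists>g. (\<forall>i<t j. g i = (i \<in> \<sigma>)) \<and> (\<forall>m\<le>j. cylinder (t (Suc j)) g \<inter> G m = {})"
      using t that by (auto simp: avoiding_partition_def)
    then show ?thesis unfolding g_def by (rule someI_ex)
  qed
  define Q where "Q j S = (if {t j..<t (Suc j)} \<subseteq> A then {i\<in>{t j..<t (Suc j)}. g j S i} else {})" for j S
  define P where "P = rec_nat {} (\<lambda>j S. S \<union> Q j S)"
  define B where "B = (\<Union>j. P j)"
  have cut: "B \<inter> {..<t j} = P j" for j
    unfolding B_def
  proof (rule UN_increments_Int_lessThan[where Q="\<lambda>j. Q j (P j)"])
    show "Q j (P j) \<subseteq> {t j..<t (Suc j)}" for j by (auto simp: Q_def)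
  qed (use t in \<open>simp_all add: P_def avoiding_partition_def strict_mono_mono\<close>)
  have "P j \<subseteq> A" for j by (induction j) (auto simp: P_def Q_def)
  then have "B \<subseteq> A" by (auto simp: B_def)
  moreover have "(\<lambda>n. n \<in> B) \<notin> G m" for m
  proof
    assume B: "(\<lambda>n. n \<in> B) \<in> G m"
    obtain j where j: "m \<le> j" "{t j..<t (Suc j)} \<subseteq> A"
      using A by (auto simp: infinitely_many_blocks_def)
    have Pj: "P j \<subseteq> {..<t j}" using cut by blast
    have "(\<lambda>n. n \<in> B) \<in> cylinder (t (Suc j)) (g j (P j))"
      unfolding cylinder_def
    proof (intro CollectI allI impI)
      fix i assume i: "i < t (Suc j)"
      have "(i \<in> B) = (i \<in> P (Suc j))" using cut[of "Suc j"] i by blast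
      also have "\<dots> = g j (P j) i"
        using g[OF Pj] j(2) i Pj by (cases "i < t j") (auto simp: P_def Q_def)
      finally show "(i \<in> B) = g j (P j) i" .
    qed
    then show False using g[OF Pj] j(1) B by blast
  qed
  ultimately show ?thesis by blast
qed

lemma is_ideal_subset: "is_ideal I \<Longrightarrow> A \<in> I \<Longrightarrow> B \<subseteq> A \<Longrightarrow> B \<in> I"
  unfolding is_ideal_def by blast

lemma is_ideal_finite: "is_ideal I \<Longrightarrow> finite A \<Longrightarrow> A \<in> I"
  unfolding is_ideal_def by blast

theorem meager_ideal_interval_partition:
  assumes "meager_ideal I"
  shows "\<exists>t. strict_mono t \<and> (\<forall>A. infinitely_many_blocks t A \<longrightarrow> A \<notin> I)"
proof -
  have I: "is_ideal I" and "meager_in cantor_space ((\<lambda>A n. n \<in> A) ` I)"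
    using assms by (auto simp: meager_ideal_def)
  then obtain F where F: "countable F" "\<forall>T\<in>F. nowhere_dense_in cantor_space T"
      "(\<lambda>A n. n \<in> A) ` I \<subseteq> \<Union>F"
    unfolding meager_in_def by blast
  have "F \<noteq> {}" using F(3) is_ideal_finite[OF I, of "{}"] by auto
  define G where "G = from_nat_into F"
  have G: "range G = F" unfolding G_def using F(1) \<open>F \<noteq> {}\<close> by simp
  have "nowhere_dense_in cantor_space (G m)" for m using F(2) unfolding G[symmetric] by simp
  then obtain t where t: "avoiding_partition G t" using exists_avoiding_partition by blast
  have "A \<notin> I" if A: "infinitely_many_blocks t A" for A
  proof
    assume "A \<in> I"
    obtain B where "B \<subseteq> A" "\<forall>m. (\<lambda>n. n \<in> B) \<notin> G m"
      using infinitely_many_blocks_avoiding_subset[OF t A] by blast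
    moreover have "B \<in> I" using is_ideal_subset[OF I \<open>A \<in> I\<close> \<open>B \<subseteq> A\<close>] .
    ultimately show False using F(3) G by blast
  qed
  then show ?thesis using t by (auto simp: avoiding_partition_def)
qed

section \<open>Regular matrices\<close>

lemma regular_matrixD:
  assumes "regular_matrix a" "z \<longlonglongrightarrow> L"
  shows "summable (\<lambda>i. a n i * z i)" "(\<lambda>n. \<Sum>i. a n i * z i) \<longlonglongrightarrow> L"
proof -
  have "(\<forall>n. \<forall>j<1. summable (\<lambda>i. a n i * z i)) \<and> (\<forall>j<(1::nat). (\<lambda>n. \<Sum>i. a n i * z i) \<longlonglongrightarrow> L)"
    using assms(1)[unfolded regular_matrix_def, THEN spec[where x=1], THEN spec[where x="\<lambda>i j. z i"],
        THEN spec[where x="\<lambda>j. L"]] assms(2) by simp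
  then show "summable (\<lambda>i. a n i * z i)" "(\<lambda>n. \<Sum>i. a n i * z i) \<longlonglongrightarrow> L" by auto
qed

lemma summable_mult_bounded:
  fixes c z :: "nat \<Rightarrow> real"
  assumes "summable (\<lambda>i. \<bar>c i\<bar>)" "\<And>i. \<bar>z i\<bar> \<le> C"
  shows "summable (\<lambda>i. c i * z i)"
proof (rule summable_comparison_test'[where N=0])
  show "summable (\<lambda>i. C * \<bar>c i\<bar>)" using assms(1) by (rule summable_mult)
  show "norm (c i * z i) \<le> C * \<bar>c i\<bar>" for i
    using mult_left_mono[OF assms(2)[of i] abs_ge_zero[of "c i"]] by (simp add: abs_mult mult.commute)
qed

lemma exists_blocks_large_abs_sum:
  fixes c :: "nat \<Rightarrow> real"
  assumes "\<not> summable (\<lambda>i. \<bar>c i\<bar>)"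
  shows "\<exists>B. strict_mono B \<and> B 0 = 0 \<and> (\<forall>m. real (Suc m) \<le> (\<Sum>i\<in>{B m..<B (Suc m)}. \<bar>c i\<bar>))"
proof -
  have "\<exists>N'. N < N' \<and> real K \<le> (\<Sum>i\<in>{N..<N'}. \<bar>c i\<bar>)" for N K
  proof -
    obtain N' where N': "real K + (\<Sum>i<N. \<bar>c i\<bar>) < (\<Sum>i<N'. \<bar>c i\<bar>)"
      using assms summableI_nonneg_bounded[of "\<lambda>i. \<bar>c i\<bar>"] by (meson abs_ge_zero not_le)
    have "N < N'"
    proof (rule ccontr)
      assume "\<not> N < N'"
      then have "(\<Sum>i<N'. \<bar>c i\<bar>) \<le> (\<Sum>i<N. \<bar>c i\<bar>)" by (intro sum_mono2) auto
      then show False using N' by simp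
    qed
    moreover have "(\<Sum>i<N. \<bar>c i\<bar>) + (\<Sum>i\<in>{N..<N'}. \<bar>c i\<bar>) = (\<Sum>i<N'. \<bar>c i\<bar>)"
      using sum.atLeastLessThan_concat[of 0 N N' "\<lambda>i. \<bar>c i\<bar>"] \<open>N < N'\<close> by (simp add: atLeast0LessThan)
    ultimately show ?thesis using N' by (intro exI[of _ N']) auto
  qed
  then have big: "\<exists>N'. N < N' \<and> real (Suc m) \<le> (\<Sum>i\<in>{N..<N'}. \<bar>c i\<bar>)" for m N by blast
  define nxt where "nxt m N = (SOME N'. N < N' \<and> real (Suc m) \<le> (\<Sum>i\<in>{N..<N'}. \<bar>c i\<bar>))" for m N
  have nxt: "N < nxt m N \<and> real (Suc m) \<le> (\<Sum>i\<in>{N..<nxt m N}. \<bar>c i\<bar>)" for m N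
    unfolding nxt_def by (rule someI_ex[OF big])
  define B where "B = rec_nat 0 nxt"
  have B: "B 0 = 0" "B (Suc m) = nxt m (B m)" for m by (simp_all add: B_def)
  have "strict_mono B" by (rule strict_monoI_Suc) (simp add: B nxt)
  then show ?thesis using nxt B by auto
qed

lemma strict_mono_block_index:
  fixes B :: "nat \<Rightarrow> nat"
  assumes "strict_mono B" "B 0 = 0"
  shows "\<exists>ix. \<forall>i. B (ix i) \<le> i \<and> i < B (Suc (ix i))"
proof -
  have "\<exists>m. B m \<le> i \<and> i < B (Suc m)" for i
  proof -
    have "\<exists>m. i < B (Suc m)"
      using strict_mono_imp_increasing[OF assms(1), of "Suc i"] by (intro exI[of _ i]) simp
    then obtain m where m: "i < B (Suc m)" "\<forall>m'<m. \<not> i < B (Suc m')"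
      using exists_least_iff[of "\<lambda>m. i < B (Suc m)"] by blast
    then have "B m \<le> i" using assms(2) by (cases m) auto
    then show ?thesis using m by blast
  qed
  then show ?thesis by metis
qed

text \<open>The classical construction: on the \<open>m\<close>-th block, where \<open>\<bar>c\<bar>\<close> has mass at least
  \<open>m + 1\<close>, take \<open>z i = sgn (c i) / (m + 1)\<close>.\<close>
lemma summable_abs_if_summable_mult_null:
  fixes c :: "nat \<Rightarrow> real"
  assumes H: "\<And>z. z \<longlonglongrightarrow> 0 \<Longrightarrow> summable (\<lambda>i. c i * z i)"
  shows "summable (\<lambda>i. \<bar>c i\<bar>)"
proof (rule ccontr)
  assume "\<not> summable (\<lambda>i. \<bar>c i\<bar>)"
  then obtain B where B: "strict_mono B" "B 0 = 0" "\<And>m. real (Suc m) \<le> (\<Sum>i\<in>{B m..<B (Suc m)}. \<bar>c i\<bar>)"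
    using exists_blocks_large_abs_sum by blast
  obtain ix where ix: "\<And>i. B (ix i) \<le> i" "\<And>i. i < B (Suc (ix i))"
    using strict_mono_block_index[OF B(1,2)] by blast
  have ix_eq: "ix i = m" if "B m \<le> i" "i < B (Suc m)" for i m
    using ix[of i] that B(1) by (metis Suc_le_eq le_less_trans linorder_neqE_nat not_le strict_mono_less_eq)
  have ix_ge: "m \<le> ix i" if "B m \<le> i" for i m
    using ix(2)[of i] that B(1) by (metis not_le Suc_le_eq le_less_trans strict_mono_less_eq)
  define z where "z i = sgn (c i) / real (Suc (ix i))" for i
  have "z \<longlonglongrightarrow> 0"
  proof (rule LIMSEQ_I)
    fix r :: real assume "0 < r"
    then obtain m0 where m0: "1 / real (Suc m0) < r"
      using reals_Archimedean by (auto simp: inverse_eq_divide)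
    have "norm (z i - 0) < r" if "B m0 \<le> i" for i
    proof -
      have "\<bar>z i\<bar> \<le> 1 / real (Suc (ix i))"
        by (simp add: z_def abs_sgn_eq abs_mult divide_le_eq_1 abs_divide)
      also have "\<dots> \<le> 1 / real (Suc m0)" using ix_ge[OF that] by (simp add: frac_le)
      finally show ?thesis using m0 by simp
    qed
    then show "\<exists>no. \<forall>i\<ge>no. norm (z i - 0) < r" by blast
  qed
  then obtain M where M: "\<forall>m\<ge>M. \<forall>n. norm (\<Sum>i\<in>{m..<n}. c i * z i) < 1"
    using H summable_Cauchy[of "\<lambda>i. c i * z i"] by (metis zero_less_one)
  have "(\<Sum>i\<in>{B M..<B (Suc M)}. c i * z i) = (\<Sum>i\<in>{B M..<B (Suc M)}. \<bar>c i\<bar>) / real (Suc M)"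
    unfolding sum_divide_distrib
    by (intro sum.cong refl) (simp add: z_def ix_eq abs_sgn[of "c _"] mult.commute)
  also have "\<dots> \<ge> 1" using B(3)[of M] by simp
  finally have "1 \<le> (\<Sum>i\<in>{B M..<B (Suc M)}. c i * z i)" .
  moreover have "norm (\<Sum>i\<in>{B M..<B (Suc M)}. c i * z i) < 1"
    using M strict_mono_imp_increasing[OF B(1), of M] by blast
  ultimately show False by simp
qed

lemma regular_matrix_abs_summable: "regular_matrix a \<Longrightarrow> summable (\<lambda>i. \<bar>a n i\<bar>)"
  by (intro summable_abs_if_summable_mult_null regular_matrixD(1))

lemma regular_matrix_column_tendsto_zero:
  assumes "regular_matrix a"
  shows "(\<lambda>n. a n i) \<longlonglongrightarrow> 0"
proof -
  have "(\<lambda>m. if m = i then 1 else 0 :: real) \<longlonglongrightarrow> 0"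
    by (rule LIMSEQ_offset[where k="Suc i"]) simp
  then have "(\<lambda>n. \<Sum>m. a n m * (if m = i then 1 else 0)) \<longlonglongrightarrow> 0"
    by (rule regular_matrixD(2)[OF assms])
  moreover have "(\<Sum>m. a n m * (if m = i then 1 else 0)) = a n i" for n
    using sums_unique[OF sums_single[of i "a n"]] by (simp add: if_distrib cong: if_cong)
  ultimately show ?thesis by simp
qed

lemma regular_matrix_row_sum_tendsto_one: "regular_matrix a \<Longrightarrow> (\<lambda>n. \<Sum>i. a n i) \<longlonglongrightarrow> 1"
  using regular_matrixD(2)[of a "\<lambda>_. 1" 1] by simp

lemma suminf_abs_mult_split_bound:
  fixes a w :: "nat \<Rightarrow> real"
  assumes sa: "summable (\<lambda>i. \<bar>a i\<bar>)" and w: "\<And>i. 0 \<le> w i" "\<And>i. w i \<le> 1"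
    and mid: "\<And>i. M \<le> i \<Longrightarrow> i < L \<Longrightarrow> w i \<le> e" and "0 \<le> e" "M \<le> L"
  shows "(\<Sum>i. \<bar>a i\<bar> * w i) \<le> (\<Sum>i<M. \<bar>a i\<bar>) + e * (\<Sum>i. \<bar>a i\<bar>) + (\<Sum>i. \<bar>a (i + L)\<bar>)"
proof -
  define head where "head i = (if i < M then \<bar>a i\<bar> else 0)" for i
  define tail where "tail i = (if L \<le> i then \<bar>a i\<bar> else 0)" for i
  have sh: "summable head" and st: "summable tail"
    unfolding head_def tail_def by (auto intro: summable_comparison_test'[OF sa])
  have se: "summable (\<lambda>i. e * \<bar>a i\<bar>)" using sa by (rule summable_mult)
  have "\<bar>a i\<bar> * w i \<le> head i + e * \<bar>a i\<bar> + tail i" for i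
  proof -
    have "\<bar>a i\<bar> * w i \<le> \<bar>a i\<bar>" using mult_left_mono[OF w(2), of "\<bar>a i\<bar>"] by simp
    moreover have "\<bar>a i\<bar> * w i \<le> e * \<bar>a i\<bar>" if "M \<le> i" "i < L"
      using mult_left_mono[OF mid[OF that], of "\<bar>a i\<bar>"] by (simp add: mult.commute)
    moreover have "0 \<le> e * \<bar>a i\<bar>" using \<open>0 \<le> e\<close> by simp
    ultimately show ?thesis unfolding head_def tail_def by (cases "i < M"; cases "L \<le> i") auto
  qed
  moreover have "summable (\<lambda>i. \<bar>a i\<bar> * w i)"
    using summable_mult_bounded[of "\<lambda>i. \<bar>a i\<bar>" w 1] sa w by simp
  ultimately have "(\<Sum>i. \<bar>a i\<bar> * w i) \<le> (\<Sum>i. head i + e * \<bar>a i\<bar> + tail i)"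
    by (intro suminf_le summable_add sh se st)
  also have "\<dots> = (\<Sum>i. head i) + e * (\<Sum>i. \<bar>a i\<bar>) + (\<Sum>i. tail i)"
    using sh se st sa by (simp add: suminf_add[symmetric] summable_add suminf_mult)
  also have "(\<Sum>i. head i) = (\<Sum>i<M. \<bar>a i\<bar>)"
    by (subst suminf_finite[of "{..<M}"]) (auto simp: head_def)
  also have "(\<Sum>i. tail i) = (\<Sum>i. \<bar>a (i + L)\<bar>)"
  proof -
    have "(\<Sum>i. tail i) = (\<Sum>i. tail (i + L)) + (\<Sum>i<L. tail i)"
      by (rule suminf_split_initial_segment[OF st])
    then show ?thesis by (simp add: tail_def)
  qed
  finally show ?thesis .
qed

lemma suminf_mult_close:
  fixes a p :: "nat \<Rightarrow> real"
  assumes sa: "summable (\<lambda>i. \<bar>a i\<bar>)" and s1: "(\<Sum>i. \<bar>a i\<bar>) \<le> 1 + d"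
    and s2: "\<bar>(\<Sum>i. a i) - 1\<bar> \<le> d" and s3: "(\<Sum>i<M. \<bar>a i\<bar>) \<le> d"
    and s4: "(\<Sum>i. \<bar>a (i + L)\<bar>) \<le> d" and M_le_L: "M \<le> L"
    and p1: "\<And>i. \<bar>p i - \<eta>\<bar> \<le> 1" and p2: "\<And>i. M \<le> i \<Longrightarrow> i < L \<Longrightarrow> \<bar>p i - \<eta>\<bar> \<le> 2 * d"
    and \<eta>: "\<bar>\<eta>\<bar> \<le> 1" and d: "0 \<le> d" "d \<le> 1"
  shows "\<bar>(\<Sum>i. a i * p i) - \<eta>\<bar> \<le> 7 * d"
proof -
  have sa': "summable a" using sa by (rule summable_rabs_cancel)
  have sq: "summable (\<lambda>i. a i * (p i - \<eta>))" using summable_mult_bounded[OF sa p1] .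
  have sq_abs: "summable (\<lambda>i. \<bar>a i * (p i - \<eta>)\<bar>)"
    using summable_mult_bounded[of "\<lambda>i. \<bar>a i\<bar>" "\<lambda>i. \<bar>p i - \<eta>\<bar>" 1] sa p1 by (simp add: abs_mult)
  have "(\<Sum>i. a i * p i) = (\<Sum>i. a i * (p i - \<eta>) + \<eta> * a i)" by (simp add: algebra_simps)
  also have "\<dots> = (\<Sum>i. a i * (p i - \<eta>)) + \<eta> * (\<Sum>i. a i)"
    using suminf_add[OF sq summable_mult[OF sa', of \<eta>]] suminf_mult[OF sa', of \<eta>] by simp
  finally have eq: "(\<Sum>i. a i * p i) - \<eta> = (\<Sum>i. a i * (p i - \<eta>)) + \<eta> * ((\<Sum>i. a i) - 1)"
    by (simp add: algebra_simps)
  have "\<bar>\<Sum>i. a i * (p i - \<eta>)\<bar> \<le> (\<Sum>i. \<bar>a i\<bar> * \<bar>p i - \<eta>\<bar>)"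
    using summable_rabs[OF sq_abs] by (simp add: abs_mult)
  also have "\<dots> \<le> (\<Sum>i<M. \<bar>a i\<bar>) + 2 * d * (\<Sum>i. \<bar>a i\<bar>) + (\<Sum>i. \<bar>a (i + L)\<bar>)"
    using d by (intro suminf_abs_mult_split_bound[OF sa _ p1 p2 _ M_le_L]) auto
  also have "2 * d * (\<Sum>i. \<bar>a i\<bar>) \<le> 2 * d * (1 + d)" using s1 d by (intro mult_left_mono) auto
  also have "2 * d * (1 + d) \<le> 4 * d" using d mult_left_mono[OF d(2), of d] by (simp add: algebra_simps)
  finally have Q: "\<bar>\<Sum>i. a i * (p i - \<eta>)\<bar> \<le> 6 * d" using s3 s4 by linarith
  have "\<bar>\<eta> * ((\<Sum>i. a i) - 1)\<bar> \<le> 1 * d"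
    unfolding abs_mult by (rule mult_mono[OF \<eta> s2]) auto
  then show ?thesis unfolding eq using Q by linarith
qed

lemma regular_matrix_rows_window:
  assumes a: "regular_matrix a" "(\<lambda>n. \<Sum>i. \<bar>a n i\<bar>) \<longlonglongrightarrow> 1" and d: "0 < d" and t: "strict_mono t"
  shows "\<exists>j\<ge>J. \<exists>L\<ge>M. \<forall>n\<in>{t j..<t (Suc j)}. (\<Sum>i. \<bar>a n i\<bar>) \<le> 1 + d \<and>
    \<bar>(\<Sum>i. a n i) - 1\<bar> \<le> d \<and> (\<Sum>i<M. \<bar>a n i\<bar>) \<le> d \<and> (\<Sum>i. \<bar>a n (i + L)\<bar>) \<le> d"
proof -
  have "(\<lambda>n. \<Sum>i<M. \<bar>a n i\<bar>) \<longlonglongrightarrow> (\<Sum>i<M. 0)"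
    by (intro tendsto_sum tendsto_rabs_zero regular_matrix_column_tendsto_zero[OF a(1)])
  then have ev: "\<forall>\<^sub>F n in sequentially. dist (\<Sum>i<M. \<bar>a n i\<bar>) 0 < d"
    using tendstoD[OF _ d] by fastforce
  obtain N where N: "\<And>n. N \<le> n \<Longrightarrow> dist (\<Sum>i. \<bar>a n i\<bar>) 1 < d \<and> dist (\<Sum>i. a n i) 1 < d \<and>
      dist (\<Sum>i<M. \<bar>a n i\<bar>) 0 < d"
    using eventually_conj[OF tendstoD[OF a(2) d]
        eventually_conj[OF tendstoD[OF regular_matrix_row_sum_tendsto_one[OF a(1)] d] ev]]
    unfolding eventually_sequentially by blast
  define j where "j = J + N"
  obtain L0 where L0: "\<And>n L. L0 n \<le> L \<Longrightarrow> norm (\<Sum>i. \<bar>a n (i + L)\<bar>) < d"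
    using suminf_exist_split[OF d regular_matrix_abs_summable[OF a(1)]] by metis
  define L where "L = M + (\<Sum>n\<in>{t j..<t (Suc j)}. L0 n)"
  have "(\<Sum>i. \<bar>a n i\<bar>) \<le> 1 + d \<and> \<bar>(\<Sum>i. a n i) - 1\<bar> \<le> d \<and> (\<Sum>i<M. \<bar>a n i\<bar>) \<le> d \<and>
      (\<Sum>i. \<bar>a n (i + L)\<bar>) \<le> d" if n: "n \<in> {t j..<t (Suc j)}" for n
  proof -
    have "N \<le> n" using n strict_mono_imp_increasing[OF t, of j] by (simp add: j_def)
    then have "dist (\<Sum>i. \<bar>a n i\<bar>) 1 < d" "dist (\<Sum>i. a n i) 1 < d" "dist (\<Sum>i<M. \<bar>a n i\<bar>) 0 < d"
      using N by blast+
    moreover have "L0 n \<le> L" using member_le_sum[OF n, of L0] by (simp add: L_def)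
    then have "norm (\<Sum>i. \<bar>a n (i + L)\<bar>) < d" by (rule L0)
    ultimately show ?thesis by (auto simp: dist_real_def abs_less_iff)
  qed
  moreover have "M \<le> L" "J \<le> j" by (simp_all add: L_def j_def)
  ultimately show ?thesis by blast
qed

section \<open>Baire category\<close>

lemma meager_in_subset:
  assumes "meager_in X S" "T \<subseteq> S"
  shows "meager_in X T"
proof -
  obtain F where "S \<subseteq> topspace X" "countable F" "\<forall>T\<in>F. nowhere_dense_in X T" "S \<subseteq> \<Union>F"
    using assms(1) unfolding meager_in_def by blast
  then show ?thesis using assms(2) unfolding meager_in_def by (intro conjI exI[of _ F]) auto
qed

lemma nowhere_dense_imp_meager_in: "nowhere_dense_in X S \<Longrightarrow> meager_in X S"
  unfolding meager_in_def nowhere_dense_in_def by (intro conjI exI[of _ "{S}"]) auto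

lemma meager_in_countable_UN:
  assumes K: "countable K" and m: "\<And>i. i \<in> K \<Longrightarrow> meager_in X (S i)"
  shows "meager_in X (\<Union>i\<in>K. S i)"
proof -
  obtain F where F: "\<And>i. i \<in> K \<Longrightarrow> countable (F i) \<and> (\<forall>T\<in>F i. nowhere_dense_in X T) \<and> S i \<subseteq> \<Union>(F i)"
    using m unfolding meager_in_def by metis
  show ?thesis unfolding meager_in_def
  proof (intro conjI exI[of _ "\<Union>i\<in>K. F i"])
    show "(\<Union>i\<in>K. S i) \<subseteq> topspace X" using m by (auto simp: meager_in_def)
    show "countable (\<Union>i\<in>K. F i)" using K F by (intro countable_UN) auto
  qed (use F in fastforce)+
qed

lemma comeager_in_countable_INT:
  assumes "countable K" "\<And>i. i \<in> K \<Longrightarrow> comeager_in X (S i)"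
  shows "comeager_in X (topspace X \<inter> (\<Inter>i\<in>K. S i))"
proof -
  have "meager_in X (\<Union>i\<in>K. topspace X - S i)"
    using assms by (intro meager_in_countable_UN) (auto simp: comeager_in_def)
  moreover have "topspace X - (topspace X \<inter> (\<Inter>i\<in>K. S i)) = (\<Union>i\<in>K. topspace X - S i)" by auto
  ultimately show ?thesis by (simp add: comeager_in_def)
qed

lemma comeager_in_mono: "comeager_in X S \<Longrightarrow> S \<subseteq> T \<Longrightarrow> T \<subseteq> topspace X \<Longrightarrow> comeager_in X T"
  unfolding comeager_in_def by (blast intro: meager_in_subset)

lemma nowhere_dense_in_Ioc:
  assumes S: "S \<subseteq> {0<..1::real}"
    and gap: "\<And>x0 r. x0 \<in> {0<..1} \<Longrightarrow> 0 < r \<Longrightarrow>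
      \<exists>c d. c < d \<and> {c<..<d} \<subseteq> {0<..1} \<and> {c<..<d} \<subseteq> ball x0 r \<and> {c<..<d} \<inter> S = {}"
  shows "nowhere_dense_in (top_of_set {0<..1}) S"
  unfolding nowhere_dense_in_def
proof (intro conjI)
  show "S \<subseteq> topspace (top_of_set {0<..1})" using S by simp
  show "top_of_set {0<..1} interior_of (top_of_set {0<..1} closure_of S) = {}"
  proof (rule ccontr)
    assume "top_of_set {0<..1} interior_of (top_of_set {0<..1} closure_of S) \<noteq> {}"
    then obtain y T where T: "openin (top_of_set {0<..1}) T" "y \<in> T" "T \<subseteq> top_of_set {0<..1} closure_of S"
      unfolding interior_of_def by blast
    obtain V where V: "open V" "T = {0<..1} \<inter> V" using T(1) by (auto simp: openin_open)
    obtain r where r: "0 < r" "ball y r \<subseteq> V" using V T(2) open_contains_ball by blast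
    obtain c d where cd: "c < d" "{c<..<d} \<subseteq> {0<..1}" "{c<..<d} \<subseteq> ball y r" "{c<..<d} \<inter> S = {}"
      using gap[of y r] T(2) V(2) r(1) by blast
    have mid: "(c + d) / 2 \<in> {c<..<d}" using cd(1) by simp
    then have "(c + d) / 2 \<in> top_of_set {0<..1} closure_of S" using cd(2,3) r(2) V(2) T(3) by blast
    moreover have "openin (top_of_set {0<..1}) {c<..<d}"
      unfolding openin_open using cd(2) by (intro exI[of _ "{c<..<d}"]) auto
    ultimately show False using mid cd(4) unfolding in_closure_of by blast
  qed
qed

section \<open>Frequency vectors and their cluster points\<close>

lemma open_fun_uniform_nbhd:
  fixes V :: "('a \<Rightarrow> real) set"
  assumes "open V" "\<eta> \<in> V"
  shows "\<exists>e>0. \<forall>g. (\<forall>s. \<bar>g s - \<eta> s\<bar> < e) \<longrightarrow> g \<in> V"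
proof -
  obtain U where U: "finite {i. U i \<noteq> UNIV}" "\<And>i. open (U i)" "\<eta> \<in> Pi\<^sub>E UNIV U" "Pi\<^sub>E UNIV U \<subseteq> V"
    using assms unfolding open_fun_def openin_product_topology_alt by auto
  define F where "F = {i. U i \<noteq> UNIV}"
  have "\<forall>s\<in>F. \<exists>e>0. ball (\<eta> s) e \<subseteq> U s"
  proof
    fix s
    have "\<eta> s \<in> U s" using U(3) by (simp add: PiE_UNIV_domain Pi_iff)
    then show "\<exists>e>0. ball (\<eta> s) e \<subseteq> U s" using U(2) open_contains_ball by blast
  qed
  then obtain E where E: "\<And>s. s \<in> F \<Longrightarrow> 0 < E s \<and> ball (\<eta> s) (E s) \<subseteq> U s" by metis
  define e where "e = Min (insert 1 (E ` F))"
  have "0 < e" unfolding e_def using U(1) E by (subst Min_gr_iff) (auto simp: F_def)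
  moreover have "g \<in> V" if g: "\<forall>s. \<bar>g s - \<eta> s\<bar> < e" for g
  proof -
    have "g s \<in> U s" for s
    proof (cases "s \<in> F")
      case True
      have "e \<le> E s" unfolding e_def using U(1) True by (intro Min_le) (auto simp: F_def)
      then have "\<bar>\<eta> s - g s\<bar> < E s" using g[rule_format, of s] by (simp add: abs_minus_commute)
      then have "g s \<in> ball (\<eta> s) (E s)" by (simp add: dist_real_def)
      then show ?thesis using E[OF True] by blast
    qed (simp add: F_def)
    then show ?thesis using U(4) by (auto simp: PiE_UNIV_domain)
  qed
  ultimately show ?thesis by blast
qed

lemma I_cluster_continuous_tendsto:
  fixes f :: "nat \<Rightarrow> 'a::topological_space" and \<phi> :: "'a \<Rightarrow> real"
  assumes I: "is_ideal I" and \<eta>: "I_cluster I f \<eta>" and \<phi>: "continuous_on UNIV \<phi>"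
    and lim: "(\<lambda>n. \<phi> (f n)) \<longlonglongrightarrow> L"
  shows "\<phi> \<eta> = L"
proof (rule ccontr)
  assume "\<phi> \<eta> \<noteq> L"
  then obtain A B where AB: "open A" "open B" "\<phi> \<eta> \<in> A" "L \<in> B" "A \<inter> B = {}"
    by (metis hausdorff)
  obtain N where N: "\<And>n. N \<le> n \<Longrightarrow> \<phi> (f n) \<in> B"
    using topological_tendstoD[OF lim AB(2,4)] unfolding eventually_sequentially by blast
  have "{n. f n \<in> \<phi> -` A} \<subseteq> {..<N}"
  proof
    fix n assume "n \<in> {n. f n \<in> \<phi> -` A}"
    then have "\<phi> (f n) \<notin> B" using AB(5) by auto
    then show "n \<in> {..<N}" using N by (meson lessThan_iff not_le)
  qed
  then have "{n. f n \<in> \<phi> -` A} \<in> I" using I by (blast intro: is_ideal_subset is_ideal_finite)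
  moreover have "open (\<phi> -` A)" using open_vimage[OF AB(1) \<phi>] .
  ultimately show False using \<eta> AB(3) by (auto simp: I_cluster_def)
qed

lemma freq_nonneg: "0 \<le> freq b s n x"
  by (simp add: freq_def)

lemma freq_le_one: "freq b s n x \<le> 1"
proof -
  have "card {i\<in>{1..n}. \<forall>j<length s. digit b (i + j) x = s ! j} \<le> card {1..n}"
    by (intro card_mono) auto
  then show ?thesis by (cases "n = 0") (auto simp: freq_def divide_le_eq_1)
qed

lemma freq_eq_block_count:
  assumes "length s = k"
  shows "freq b s n x = real (block_count (digit_seq b x) k s 0 n) / real n"
proof -
  have "{i\<in>{1..n}. \<forall>j<length s. digit b (i + j) x = s ! j} = Suc ` {p\<in>{0..<0+n}. block (digit_seq b x) k p = s}"
  proof (rule set_eqI, rule iffI)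
    fix i assume i: "i \<in> {i\<in>{1..n}. \<forall>j<length s. digit b (i + j) x = s ! j}"
    then have "i - 1 \<in> {p\<in>{0..<0+n}. block (digit_seq b x) k p = s}"
      using assms by (auto simp: digit_def intro!: nth_equalityI)
    then show "i \<in> Suc ` {p\<in>{0..<0+n}. block (digit_seq b x) k p = s}"
      using i by (intro image_eqI[of _ _ "i - 1"]) auto
  next
    fix i assume "i \<in> Suc ` {p\<in>{0..<0+n}. block (digit_seq b x) k p = s}"
    then obtain p where p: "i = Suc p" "p < n" "block (digit_seq b x) k p = s" by auto
    have "digit b (i + j) x = s ! j" if "j < length s" for j
    proof -
      have "s ! j = block (digit_seq b x) k p ! j" using p(3) by simp
      then show ?thesis using that assms p(1) by (simp add: digit_def)
    qed
    then show "i \<in> {i\<in>{1..n}. \<forall>j<length s. digit b (i + j) x = s ! j}" using p by auto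
  qed
  then show ?thesis
    unfolding freq_def block_count_def by (simp add: card_image)
qed

lemma freq_eq_block_count_prefix:
  assumes "\<forall>q<N. digit_seq b x q = e q" "length s = k" "n + k \<le> N"
  shows "freq b s n x = real (block_count e k s 0 n) / real n"
  using freq_eq_block_count[OF assms(2)] block_count_cong[of 0 n k "digit_seq b x" e s] assms(1,3)
  by simp

lemma sum_freq_strings:
  assumes "2 \<le> b" "x \<in> {0<..1}" "0 < n"
  shows "(\<Sum>s\<in>strings b k. freq b s n x) = 1"
proof -
  have "(\<Sum>s\<in>strings b k. freq b s n x) = real (\<Sum>s\<in>strings b k. block_count (digit_seq b x) k s 0 n) / real n"
    by (simp add: freq_eq_block_count strings_def sum_divide_distrib)
  also have "(\<Sum>s\<in>strings b k. block_count (digit_seq b x) k s 0 n) = n"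
    using digit_seq_less[OF assms(1,2)] by (rule sum_block_count_strings)
  finally show ?thesis using assms(3) by simp
qed

lemma freq_balance:
  assumes "2 \<le> b" "x \<in> {0<..1}" "v \<in> strings b k"
  shows "\<bar>(\<Sum>c<b. freq b (c # v) n x) - (\<Sum>c<b. freq b (v @ [c]) n x)\<bar> \<le> 1 / real n"
proof -
  let ?f = "digit_seq b x"
  have lv: "length v = k" using assms(3) by (simp add: strings_def)
  have f: "\<And>q. ?f q < b" using digit_seq_less[OF assms(1,2)] .
  have "(\<Sum>c<b. freq b (c # v) n x) = real (\<Sum>c<b. block_count ?f (Suc k) (c # v) 0 n) / real n"
    using lv by (simp add: freq_eq_block_count sum_divide_distrib)
  also have "\<dots> = real (block_count ?f k v 1 n) / real n"
    using sum_block_count_Cons[where f="digit_seq b x", OF f] by simp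
  finally have Cons: "(\<Sum>c<b. freq b (c # v) n x) = real (block_count ?f k v 1 n) / real n" .
  have "(\<Sum>c<b. freq b (v @ [c]) n x) = real (\<Sum>c<b. block_count ?f (Suc k) (v @ [c]) 0 n) / real n"
    using lv by (simp add: freq_eq_block_count sum_divide_distrib)
  also have "\<dots> = real (block_count ?f k v 0 n) / real n"
    using sum_block_count_snoc[where f="digit_seq b x", OF f] by simp
  finally have snoc: "(\<Sum>c<b. freq b (v @ [c]) n x) = real (block_count ?f k v 0 n) / real n" .
  show ?thesis
    unfolding Cons snoc diff_divide_distrib[symmetric]
    using block_count_Suc_start[of ?f k v 0 n] by (simp add: abs_div divide_right_mono)
qed

lemma summable_mat_freq_row:
  "regular_matrix a \<Longrightarrow> summable (\<lambda>i. a n i * freq b s (Suc i) x)"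
  by (rule summable_mult_bounded[OF regular_matrix_abs_summable, where C=1])
     (auto simp: abs_le_iff freq_le_one intro: order_trans[OF _ freq_nonneg])

lemma mat_freq_sum_tendsto_one:
  assumes "2 \<le> b" "x \<in> {0<..1}" "regular_matrix a"
  shows "(\<lambda>n. \<Sum>s\<in>strings b k. mat_freq a b k x n s) \<longlonglongrightarrow> 1"
proof -
  have "(\<Sum>s\<in>strings b k. mat_freq a b k x n s) = (\<Sum>i. \<Sum>s\<in>strings b k. a n i * freq b s (Suc i) x)" for n
    using summable_mat_freq_row[OF assms(3)] by (simp add: mat_freq_def suminf_sum)
  also have "(\<Sum>i. \<Sum>s\<in>strings b k. a n i * freq b s (Suc i) x) = (\<Sum>i. a n i)" for n
    using sum_freq_strings[OF assms(1,2)] by (simp flip: sum_distrib_left)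
  finally show ?thesis using regular_matrix_row_sum_tendsto_one[OF assms(3)] by simp
qed

lemma mat_freq_negative_part_tendsto_zero:
  assumes a: "regular_matrix a" "(\<lambda>n. \<Sum>i. \<bar>a n i\<bar>) \<longlonglongrightarrow> 1"
  shows "(\<lambda>n. min (mat_freq a b k x n s) 0) \<longlonglongrightarrow> 0"
proof (rule real_tendsto_sandwich[where f="\<lambda>n. (\<Sum>i. a n i) - (\<Sum>i. \<bar>a n i\<bar>)" and h="\<lambda>n. 0"])
  have sa: "summable (\<lambda>i. \<bar>a n i\<bar>)" for n using regular_matrix_abs_summable[OF a(1)] .
  have nonpos: "(\<Sum>i. a n i) - (\<Sum>i. \<bar>a n i\<bar>) \<le> 0" for n
    using summable_rabs[OF sa[of n]] by linarith
  have "(\<Sum>i. a n i) - (\<Sum>i. \<bar>a n i\<bar>) \<le> mat_freq a b k x n s" for n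
  proof (cases "s \<in> strings b k")
    case True
    have "a n i - \<bar>a n i\<bar> \<le> a n i * freq b s (Suc i) x" for i
    proof (cases "0 \<le> a n i")
      case False
      then have "a n i * 1 \<le> a n i * freq b s (Suc i) x" by (intro mult_left_mono_neg freq_le_one) auto
      then show ?thesis using False by simp
    qed (simp add: freq_nonneg)
    then have "(\<Sum>i. a n i - \<bar>a n i\<bar>) \<le> (\<Sum>i. a n i * freq b s (Suc i) x)"
      using summable_mat_freq_row[OF a(1)] summable_rabs_cancel[OF sa] sa
      by (intro suminf_le summable_diff) auto
    then show ?thesis
      using True suminf_diff[OF summable_rabs_cancel[OF sa] sa] by (simp add: mat_freq_def)
  qed (use nonpos in \<open>simp add: mat_freq_def\<close>)
  then show "\<forall>\<^sub>F n in sequentially. (\<Sum>i. a n i) - (\<Sum>i. \<bar>a n i\<bar>) \<le> min (mat_freq a b k x n s) 0"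
    using nonpos by (intro always_eventually) simp
  show "(\<lambda>n. (\<Sum>i. a n i) - (\<Sum>i. \<bar>a n i\<bar>)) \<longlonglongrightarrow> 0"
    using tendsto_diff[OF regular_matrix_row_sum_tendsto_one[OF a(1)] a(2)] by simp
qed auto

lemma mat_freq_balance_tendsto_zero:
  assumes "2 \<le> b" "x \<in> {0<..1}" "regular_matrix a" "v \<in> strings b k"
  shows "(\<lambda>n. (\<Sum>c<b. mat_freq a b (Suc k) x n (c # v)) - (\<Sum>c<b. mat_freq a b (Suc k) x n (v @ [c]))) \<longlonglongrightarrow> 0"
proof -
  define D where "D i = (\<Sum>c<b. freq b (c # v) (Suc i) x) - (\<Sum>c<b. freq b (v @ [c]) (Suc i) x)" for i
  have "D \<longlonglongrightarrow> 0"
  proof (rule Lim_null_comparison)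
    show "\<forall>\<^sub>F i in sequentially. norm (D i) \<le> 1 / real (Suc i)"
      using freq_balance[OF assms(1,2,4)] unfolding D_def real_norm_def by (intro always_eventually allI) blast
  qed (rule LIMSEQ_Suc[OF lim_const_over_n])
  moreover have "(\<Sum>c<b. mat_freq a b (Suc k) x n (c # v)) - (\<Sum>c<b. mat_freq a b (Suc k) x n (v @ [c])) =
      (\<Sum>i. a n i * D i)" for n
  proof -
    have "c # v \<in> strings b (Suc k)" "v @ [c] \<in> strings b (Suc k)" if "c < b" for c
      using assms(4) that by (auto simp: strings_def)
    then have "(\<Sum>c<b. mat_freq a b (Suc k) x n (c # v)) - (\<Sum>c<b. mat_freq a b (Suc k) x n (v @ [c])) =
        (\<Sum>i. \<Sum>c<b. a n i * freq b (c # v) (Suc i) x) - (\<Sum>i. \<Sum>c<b. a n i * freq b (v @ [c]) (Suc i) x)"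
      using summable_mat_freq_row[OF assms(3)] by (simp add: mat_freq_def suminf_sum)
    also have "\<dots> = (\<Sum>i. a n i * D i)"
      using summable_mat_freq_row[OF assms(3)]
      by (simp add: D_def suminf_diff summable_sum right_diff_distrib sum_distrib_left)
    finally show ?thesis .
  qed
  ultimately show ?thesis using regular_matrixD(2)[OF assms(3)] by simp
qed

lemma Gamma_subset_Delta:
  assumes b: "2 \<le> b" and x: "x \<in> {0<..1}" and I: "is_ideal I"
    and a: "regular_matrix a" "(\<lambda>n. \<Sum>i. \<bar>a n i\<bar>) \<longlonglongrightarrow> 1"
  shows "Gamma b (Suc k) x I a \<subseteq> Delta b (Suc k)"
proof
  fix \<eta> assume "\<eta> \<in> Gamma b (Suc k) x I a"
  then have \<eta>: "I_cluster I (mat_freq a b (Suc k) x) \<eta>" by (simp add: Gamma_def)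
  note limit = I_cluster_continuous_tendsto[OF I \<eta>]
  have "\<eta> s = 0" if "s \<notin> strings b (Suc k)" for s
    using limit[of "\<lambda>g. g s"] that by (simp add: mat_freq_def)
  moreover have "(\<Sum>s\<in>strings b (Suc k). \<eta> s) = 1"
    using limit[OF _ mat_freq_sum_tendsto_one[OF b x a(1)]] by (simp add: continuous_on_sum)
  moreover have "0 \<le> \<eta> s" for s
  proof -
    have "min (\<eta> s) 0 = 0"
      using limit[OF _ mat_freq_negative_part_tendsto_zero[OF a]] by (simp add: continuous_on_min)
    then show ?thesis by linarith
  qed
  moreover have "(\<Sum>c<b. \<eta> (c # v)) = (\<Sum>c<b. \<eta> (v @ [c]))" if "v \<in> strings b k" for v
    using limit[OF _ mat_freq_balance_tendsto_zero[OF b x a(1) that]]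
    by (simp add: continuous_on_diff continuous_on_sum)
  ultimately show "\<eta> \<in> Delta b (Suc k)" by (simp add: Delta_def)
qed

lemma exists_digits_block_count_approx:
  assumes b: "2 \<le> b" and \<eta>: "\<eta> \<in> Delta b (Suc k)" and d: "0 < d" and x0: "x0 \<in> {0<..1}"
  shows "\<exists>e M. N0 \<le> M \<and> (\<forall>q. e q < b) \<and> (\<forall>q<N0. e q = digit_seq b x0 q) \<and>
    (\<forall>m\<ge>M. \<forall>s\<in>strings b (Suc k). \<bar>real (block_count e (Suc k) s 0 m) - real m * \<eta> s\<bar> \<le> 2 * d * real m)"
proof -
  obtain f K where f: "\<forall>q. f q < b"
    and K: "\<forall>n\<ge>K. \<forall>s\<in>strings b (Suc k). \<bar>real (block_count f (Suc k) s 0 n) - real n * \<eta> s\<bar> \<le> d * real n"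
    using exists_seq_block_count_approx[OF \<eta> d] by blast
  define e where "e q = (if q < N0 then digit_seq b x0 q else f (q - N0))" for q
  define M where "M = N0 + K + nat \<lceil>real N0 / d\<rceil>"
  have "\<bar>real (block_count e (Suc k) s 0 m) - real m * \<eta> s\<bar> \<le> 2 * d * real m"
    if "M \<le> m" "s \<in> strings b (Suc k)" for m s
    using block_count_approx_prefix[of K f "Suc k" s "\<eta> s" d e N0 m] K Delta_bounded[OF \<eta>] d that
    by (simp add: e_def M_def)
  moreover have "\<forall>q. e q < b" using f digit_seq_less[OF b x0] by (simp add: e_def)
  ultimately show ?thesis by (intro exI[of _ e] exI[of _ M]) (auto simp: e_def M_def)
qed

lemma mat_freq_close:
  assumes a: "regular_matrix a"
    and row: "(\<Sum>i. \<bar>a n i\<bar>) \<le> 1 + d" "\<bar>(\<Sum>i. a n i) - 1\<bar> \<le> d" "(\<Sum>i<M. \<bar>a n i\<bar>) \<le> d"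
      "(\<Sum>i. \<bar>a n (i + L)\<bar>) \<le> d" "M \<le> L"
    and \<eta>: "\<eta> \<in> Delta b (Suc k)" and d: "0 \<le> d" "d \<le> 1"
    and digits: "\<forall>q<L + Suc k. digit_seq b x q = e q"
    and e: "\<forall>m\<ge>M. \<forall>s\<in>strings b (Suc k). \<bar>real (block_count e (Suc k) s 0 m) - real m * \<eta> s\<bar> \<le> 2 * d * real m"
  shows "\<bar>mat_freq a b (Suc k) x n s - \<eta> s\<bar> \<le> 7 * d"
proof (cases "s \<in> strings b (Suc k)")
  case True
  have \<eta>s: "0 \<le> \<eta> s" "\<eta> s \<le> 1" using Delta_bounded[OF \<eta> True] by auto
  have "\<bar>freq b s (Suc i) x - \<eta> s\<bar> \<le> 2 * d" if i: "M \<le> i" "i < L" for i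
  proof -
    have "freq b s (Suc i) x = real (block_count e (Suc k) s 0 (Suc i)) / real (Suc i)"
      using freq_eq_block_count_prefix[OF digits] True i by (simp add: strings_def)
    then have "freq b s (Suc i) x - \<eta> s =
        (real (block_count e (Suc k) s 0 (Suc i)) - real (Suc i) * \<eta> s) / real (Suc i)"
      by (simp add: field_simps del: of_nat_Suc)
    moreover have "\<bar>real (block_count e (Suc k) s 0 (Suc i)) - real (Suc i) * \<eta> s\<bar> \<le> 2 * d * real (Suc i)"
      using e[rule_format, of "Suc i" s] True i(1) by simp
    ultimately show ?thesis by (simp add: abs_div pos_divide_le_eq del: of_nat_Suc)
  qed
  moreover have "\<bar>freq b s (Suc i) x - \<eta> s\<bar> \<le> 1" for i
    using freq_nonneg[of b s "Suc i" x] freq_le_one[of b s "Suc i" x] \<eta>s by linarith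
  ultimately have "\<bar>(\<Sum>i. a n i * freq b s (Suc i) x) - \<eta> s\<bar> \<le> 7 * d"
    using suminf_mult_close[OF regular_matrix_abs_summable[OF a] row] \<eta>s d by simp
  then show ?thesis using True by (simp add: mat_freq_def)
qed (use \<eta> d in \<open>simp add: mat_freq_def Delta_def\<close>)

lemma exists_interval_frequently_close:
  assumes b: "2 \<le> b" and a: "regular_matrix a" "(\<lambda>n. \<Sum>i. \<bar>a n i\<bar>) \<longlonglongrightarrow> 1"
    and \<eta>: "\<eta> \<in> Delta b (Suc k)" and \<epsilon>: "0 < \<epsilon>" and t: "strict_mono t"
    and x0: "x0 \<in> {0<..1}" and r: "0 < r"
  shows "\<exists>c d. c < d \<and> {c<..<d} \<subseteq> {0<..1} \<and> {c<..<d} \<subseteq> ball x0 r \<and>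
    (\<forall>x\<in>{c<..<d}. \<exists>j\<ge>J. \<forall>n\<in>{t j..<t (Suc j)}. \<forall>s. \<bar>mat_freq a b (Suc k) x n s - \<eta> s\<bar> < \<epsilon>)"
proof -
  define d where "d = min (\<epsilon> / 8) 1"
  have d: "0 < d" "d \<le> 1" "7 * d < \<epsilon>" using \<epsilon> by (auto simp: d_def)
  obtain N0 where N0: "(1 / real b) ^ N0 < r" using real_arch_pow_inv[OF r, of "1 / real b"] b by auto
  obtain e M where M: "N0 \<le> M" "\<forall>q. e q < b" "\<forall>q<N0. e q = digit_seq b x0 q"
    "\<forall>m\<ge>M. \<forall>s\<in>strings b (Suc k). \<bar>real (block_count e (Suc k) s 0 m) - real m * \<eta> s\<bar> \<le> 2 * d * real m"
    using exists_digits_block_count_approx[OF b \<eta> d(1) x0] by blast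
  obtain j L where j: "J \<le> j" "M \<le> L" and rows: "\<forall>n\<in>{t j..<t (Suc j)}. (\<Sum>i. \<bar>a n i\<bar>) \<le> 1 + d \<and>
      \<bar>(\<Sum>i. a n i) - 1\<bar> \<le> d \<and> (\<Sum>i<M. \<bar>a n i\<bar>) \<le> d \<and> (\<Sum>i. \<bar>a n (i + L)\<bar>) \<le> d"
    using regular_matrix_rows_window[OF a d(1) t] by blast
  have N: "N0 \<le> L + Suc k" using M(1) j(2) by simp
  have r': "1 / real b ^ N0 < r" using N0 by (simp add: power_one_over)
  obtain c dd where cd: "c < dd" "{c<..<dd} \<subseteq> {0<..1}" "{c<..<dd} \<subseteq> ball x0 r"
      "\<forall>x\<in>{c<..<dd}. \<forall>q<L + Suc k. digit_seq b x q = e q"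
    using exists_interval_with_digit_prefix[OF b x0 M(2,3) N r'] by blast
  have "\<bar>mat_freq a b (Suc k) x n s - \<eta> s\<bar> < \<epsilon>"
    if x: "x \<in> {c<..<dd}" and n: "n \<in> {t j..<t (Suc j)}" for x n s
  proof -
    have "\<bar>mat_freq a b (Suc k) x n s - \<eta> s\<bar> \<le> 7 * d"
      using rows n cd(4) x d(1)
      by (intro mat_freq_close[OF a(1) _ _ _ _ j(2) \<eta> _ d(2) _ M(4)]) auto
    then show ?thesis using d(3) by linarith
  qed
  then show ?thesis using cd(1-3) j(1) by blast
qed

lemma comeager_frequently_in_open:
  assumes b: "2 \<le> b" and a: "regular_matrix a" "(\<lambda>n. \<Sum>i. \<bar>a n i\<bar>) \<longlonglongrightarrow> 1"
    and t: "strict_mono t" and V: "open V" "V \<inter> Delta b (Suc k) \<noteq> {}"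
  shows "comeager_in (top_of_set {0<..1})
    {x\<in>{0<..1}. infinitely_many_blocks t {n. mat_freq a b (Suc k) x n \<in> V}}"
proof -
  obtain \<eta> where \<eta>: "\<eta> \<in> V" "\<eta> \<in> Delta b (Suc k)" using V(2) by blast
  obtain \<epsilon> where \<epsilon>: "0 < \<epsilon>" "\<And>g. (\<forall>s. \<bar>g s - \<eta> s\<bar> < \<epsilon>) \<Longrightarrow> g \<in> V"
    using open_fun_uniform_nbhd[OF V(1) \<eta>(1)] by blast
  define hit where "hit J = {x. \<exists>j\<ge>J. \<forall>n\<in>{t j..<t (Suc j)}. mat_freq a b (Suc k) x n \<in> V}" for J
  have "nowhere_dense_in (top_of_set {0<..1}) ({0<..1} - hit J)" for J
  proof (rule nowhere_dense_in_Ioc)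
    fix x0 r :: real assume "x0 \<in> {0<..1}" "0 < r"
    then obtain c d where cd: "c < d" "{c<..<d} \<subseteq> {0<..1}" "{c<..<d} \<subseteq> ball x0 r"
      "\<forall>x\<in>{c<..<d}. \<exists>j\<ge>J. \<forall>n\<in>{t j..<t (Suc j)}. \<forall>s. \<bar>mat_freq a b (Suc k) x n s - \<eta> s\<bar> < \<epsilon>"
      using exists_interval_frequently_close[OF b a \<eta>(2) \<epsilon>(1) t] by blast
    have "x \<in> hit J" if x: "x \<in> {c<..<d}" for x
    proof -
      obtain j where j: "J \<le> j"
        and close: "\<forall>n\<in>{t j..<t (Suc j)}. \<forall>s. \<bar>mat_freq a b (Suc k) x n s - \<eta> s\<bar> < \<epsilon>"
        using bspec[OF cd(4) x] by metis
      have "mat_freq a b (Suc k) x n \<in> V" if "n \<in> {t j..<t (Suc j)}" for n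
        using \<epsilon>(2)[OF bspec[OF close that]] .
      then show ?thesis unfolding hit_def using j by (intro CollectI exI[of _ j]) auto
    qed
    then have "{c<..<d} \<inter> ({0<..1} - hit J) = {}" by blast
    then show "\<exists>c d. c < d \<and> {c<..<d} \<subseteq> {0<..1} \<and> {c<..<d} \<subseteq> ball x0 r \<and> {c<..<d} \<inter> ({0<..1} - hit J) = {}"
      using cd by blast
  qed blast
  then have "meager_in (top_of_set {0<..1}) (\<Union>J\<in>UNIV. {0<..1} - hit J)"
    by (intro meager_in_countable_UN nowhere_dense_imp_meager_in) auto
  moreover have "{0<..1} - {x\<in>{0<..1}. infinitely_many_blocks t {n. mat_freq a b (Suc k) x n \<in> V}} \<subseteq>
      (\<Union>J\<in>UNIV. {0<..1} - hit J)"
    by (auto simp: hit_def infinitely_many_blocks_def subset_eq)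
  ultimately show ?thesis unfolding comeager_in_def by (auto intro: meager_in_subset)
qed

lemma Gamma_eq_Delta_if_frequently:
  assumes I: "is_ideal I" and t: "\<forall>A. infinitely_many_blocks t A \<longrightarrow> A \<notin> I"
    and BB: "topological_basis BB" and b: "2 \<le> b" and x: "x \<in> {0<..1}"
    and a: "regular_matrix a" "(\<lambda>n. \<Sum>i. \<bar>a n i\<bar>) \<longlonglongrightarrow> 1"
    and freq: "\<forall>V\<in>BB. V \<inter> Delta b (Suc k) \<noteq> {} \<longrightarrow> infinitely_many_blocks t {n. mat_freq a b (Suc k) x n \<in> V}"
  shows "Gamma b (Suc k) x I a = Delta b (Suc k)"
proof
  show "Gamma b (Suc k) x I a \<subseteq> Delta b (Suc k)" by (rule Gamma_subset_Delta[OF b x I a])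
  show "Delta b (Suc k) \<subseteq> Gamma b (Suc k) x I a"
  proof
    fix \<eta> assume \<eta>: "\<eta> \<in> Delta b (Suc k)"
    have "{n. mat_freq a b (Suc k) x n \<in> U} \<notin> I" if U: "open U" "\<eta> \<in> U" for U
    proof
      assume UI: "{n. mat_freq a b (Suc k) x n \<in> U} \<in> I"
      obtain V where V: "V \<in> BB" "\<eta> \<in> V" "V \<subseteq> U" using topological_basisE[OF BB U] by blast
      then have "{n. mat_freq a b (Suc k) x n \<in> V} \<notin> I" using freq t \<eta> by blast
      moreover have "{n. mat_freq a b (Suc k) x n \<in> V} \<subseteq> {n. mat_freq a b (Suc k) x n \<in> U}" using V(3) by blast
      ultimately show False using is_ideal_subset[OF I UI] by blast
    qed
    then show "\<eta> \<in> Gamma b (Suc k) x I a" by (simp add: Gamma_def I_cluster_def)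
  qed
qed

theorem corollary4p8:
  fixes I :: "nat set set" and \<A> :: "(nat \<Rightarrow> nat \<Rightarrow> real) set"
  assumes "meager_ideal I"
    and "countable \<A>"
    and "\<forall>a\<in>\<A>. regular_matrix a \<and> (\<lambda>n. \<Sum>i. \<bar>a n i\<bar>) \<longlonglongrightarrow> 1"
  shows "comeager_in (top_of_set {0<..1})
           {x \<in> {0<..1::real}. \<forall>b\<ge>2. \<forall>k\<ge>1. \<forall>a\<in>\<A>. Gamma b k x I a = Delta b k}"
proof -
  obtain t where t: "strict_mono t" "\<forall>A. infinitely_many_blocks t A \<longrightarrow> A \<notin> I"
    using meager_ideal_interval_partition[OF assms(1)] by blast
  obtain BB :: "(nat list \<Rightarrow> real) set set" where BB: "countable BB" "topological_basis BB"
    using ex_countable_basis by blast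
  define K where "K = {(b, k, a, V). 2 \<le> b \<and> a \<in> \<A> \<and> V \<in> BB \<and> V \<inter> Delta b (Suc k) \<noteq> {}}"
  define G where "G = (\<lambda>(b, k, a, V). {x\<in>{0<..1::real}. infinitely_many_blocks t {n. mat_freq a b (Suc k) x n \<in> V}})"
  have "countable K"
    by (rule countable_subset[of _ "UNIV \<times> UNIV \<times> \<A> \<times> BB"]) (auto simp: K_def assms(2) BB(1))
  moreover have "comeager_in (top_of_set {0<..1}) (G (b, k, a, V))" if "(b, k, a, V) \<in> K" for b k a V
    using that assms(3) comeager_frequently_in_open[OF _ _ _ t(1) topological_basis_open[OF BB(2)]]
    by (simp add: K_def G_def)
  ultimately have "comeager_in (top_of_set {0<..1}) ({0<..1} \<inter> (\<Inter>i\<in>K. G i))"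
    using comeager_in_countable_INT[of K "top_of_set {0<..1}" G] by force
  moreover have "{0<..1} \<inter> (\<Inter>i\<in>K. G i) \<subseteq> {x \<in> {0<..1}. \<forall>b\<ge>2. \<forall>k\<ge>1. \<forall>a\<in>\<A>. Gamma b k x I a = Delta b k}"
  proof
    fix x assume x: "x \<in> {0<..1} \<inter> (\<Inter>i\<in>K. G i)"
    have "Gamma b (Suc k) x I a = Delta b (Suc k)" if "2 \<le> b" "a \<in> \<A>" for b k a
      using Gamma_eq_Delta_if_frequently[OF _ t(2) BB(2) that(1)] x that assms(1,3)
      by (auto simp: meager_ideal_def K_def G_def)
    then show "x \<in> {x \<in> {0<..1}. \<forall>b\<ge>2. \<forall>k\<ge>1. \<forall>a\<in>\<A>. Gamma b k x I a = Delta b k}"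
      using x by (auto simp: Suc_le_eq dest!: gr0_implies_Suc)
  qed
  ultimately show ?thesis by (rule comeager_in_mono) auto
qed

end
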